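(* Let $n\ge2$, $d_1,\dots,d_n\ge2$, and let $\rho$ be a fully separable state on $\mathbb{C}^{d_1}\otimes\cdots\otimes\mathbb{C}^{d_n}$ with correlation tensor $\mathcal T$ and canonical correlation tensor $\tilde{\mathcal T}$ (defined in the context), and with moments $\bar a_i$, $\bar b_i$ as defined in the context. Then \[ \bar a_2^2\le \bar a_3\prod_{k=1}^n\sqrt{\frac{d_k-1}{2d_k}},\qquad \bar b_2^2\le \bar b_3\prod_{k=1}^n\sqrt{\frac{d_k^2-d_k+2}{2d_k^2}} . \]
   Context: For $d\ge2$, $\lambda_1^{(d)},\dots,\lambda_{d^2-1}^{(d)}$ are traceless Hermitian generators of $\mathfrak{su}(d)$ with ${\rm Tr}(\lambda_i\lambda_j)=2\delta_{ij}$, and set $\lambda_0^{(d)}=I_d$. For a multi-index $\alpha=(\alpha_1,\dots,\alpha_n)$ with $\alpha_k\in\{0,1,\dots,d_k^2-1\}$, let $m(\alpha)$ be the number of $k$ with $\alpha_k\neq0$, and define $\tilde{\mathcal T}_{\alpha_1\cdots\alpha_n}=\frac{\prod_{k:\alpha_k\ne0}d_k}{2^{m(\alpha)}\prod_{k=1}^n d_k}{\rm Tr}\big(\rho\,\lambda_{\alpha_1}^{(d_1)}\otimes\cdots\otimes\lambda_{\alpha_n}^{(d_n)}\big)$ (so $\tilde{\mathcal T}_{0\cdots0}=1/\prod_k d_k$ and $\rho=\sum_\alpha\tilde{\mathcal T}_\alpha\lambda_{\alpha_1}^{(d_1)}\otimes\cdots\otimes\lambda_{\alpha_n}^{(d_n)}$).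 The canonical correlation tensor is $\tilde{\mathcal T}$ (indices $\alpha_k\in\{0,\dots,d_k^2-1\}$) and the correlation tensor $\mathcal T$ is its restriction to $\alpha_k\in\{1,\dots,d_k^2-1\}$ for all $k$, i.e. $\mathcal T_{\alpha_1\cdots\alpha_n}=2^{-n}{\rm Tr}(\rho\,\lambda_{\alpha_1}\otimes\cdots\otimes\lambda_{\alpha_n})$. The $k$-th unfolding $\mathcal X_k$ of an $n$-index tensor $\mathcal X$ is the matrix with row index the $k$-th index and column index running over all remaining indices. The moments are $\bar a_i=\max_{1\le k\le n}{\rm Tr}\big((\mathcal T_k\mathcal T_k^{\dagger})^{i/2}\big)$ and $\bar b_i=\max_{1\le k\le n}{\rm Tr}\big((\tilde{\mathcal T}_k\tilde{\mathcal T}_k^{\dagger})^{i/2}\big)$, i.e. $\bar a_i=\|\mathcal T\|_i^i$, $\bar b_i=\|\tilde{\mathcal T}\|_i^i$ where the Schatten-$p$ norm of a tensor is the maximum of the Schatten-$p$ norms of its unfoldings. A state is fully separable if it is a convex combination $\sum_ip_i\rho_i^{(1)}\otimes\cdots\otimes\rho_i^{(n)}$ of product states. *)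

theory Defs
  imports Complex_Main "Jordan_Normal_Form.Char_Poly"
begin

(* Operators on C^d are represented as functions nat => nat => complex,
   only the entries with indices < d being relevant. *)

definition hermitian_op :: "nat \<Rightarrow> (nat \<Rightarrow> nat \<Rightarrow> complex) \<Rightarrow> bool" where
  "hermitian_op d A \<longleftrightarrow> (\<forall>i<d. \<forall>j<d. A j i = cnj (A i j))"

definition op_trace :: "nat \<Rightarrow> (nat \<Rightarrow> nat \<Rightarrow> complex) \<Rightarrow> complex" where
  "op_trace d A = (\<Sum>i<d. A i i)"

definition op_mult :: "nat \<Rightarrow> (nat \<Rightarrow> nat \<Rightarrow> complex) \<Rightarrow> (nat \<Rightarrow> nat \<Rightarrow> complex)
    \<Rightarrow> (nat \<Rightarrow> nat \<Rightarrow> complex)" where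
  "op_mult d A B = (\<lambda>i j. \<Sum>l<d. A i l * B l j)"

definition density_op :: "nat \<Rightarrow> (nat \<Rightarrow> nat \<Rightarrow> complex) \<Rightarrow> bool" where
  "density_op d A \<longleftrightarrow> hermitian_op d A \<and>
     (\<forall>v :: nat \<Rightarrow> complex. let q = (\<Sum>i<d. \<Sum>j<d. cnj (v i) * A i j * v j)
                                  in Im q = 0 \<and> Re q \<ge> 0) \<and>
     op_trace d A = 1"

definition su_generators :: "nat \<Rightarrow> (nat \<Rightarrow> nat \<Rightarrow> nat \<Rightarrow> complex) \<Rightarrow> bool" where
  "su_generators d L \<longleftrightarrow>
     (\<forall>a\<in>{1..<d^2}. hermitian_op d (L a) \<and> op_trace d (L a) = 0) \<and>
     (\<forall>a\<in>{1..<d^2}. \<forall>b\<in>{1..<d^2}.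
         op_trace d (op_mult d (L a) (L b)) = (if a = b then 2 else 0))"

definition gen_ext :: "(nat \<Rightarrow> nat \<Rightarrow> nat \<Rightarrow> nat \<Rightarrow> complex) \<Rightarrow> nat \<Rightarrow> nat \<Rightarrow> nat \<Rightarrow> nat \<Rightarrow> complex" where
  "gen_ext L d a = (if a = 0 then (\<lambda>i j. if i = j then 1 else 0) else L d a)"

(* computational basis of C^{d_1} (x) ... (x) C^{d_n}: index lists (i_1,...,i_n), i_k < d_k
   (parties are numbered 0..n-1 here) *)
definition basis_idx :: "nat \<Rightarrow> (nat \<Rightarrow> nat) \<Rightarrow> nat list set" where
  "basis_idx n d = {xs. length xs = n \<and> (\<forall>k<n. xs ! k < d k)}"

definition fully_separable :: "nat \<Rightarrow> (nat \<Rightarrow> nat) \<Rightarrow> (nat list \<Rightarrow> nat list \<Rightarrow> complex) \<Rightarrow> bool" where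
  "fully_separable n d \<rho> \<longleftrightarrow>
     (\<exists>(m::nat) (p::nat \<Rightarrow> real) (\<sigma>::nat \<Rightarrow> nat \<Rightarrow> nat \<Rightarrow> nat \<Rightarrow> complex).
        (\<forall>i<m. p i \<ge> 0) \<and> (\<Sum>i<m. p i) = 1 \<and>
        (\<forall>i<m. \<forall>k<n. density_op (d k) (\<sigma> i k)) \<and>
        (\<forall>x\<in>basis_idx n d. \<forall>y\<in>basis_idx n d.
            \<rho> x y = (\<Sum>i<m. complex_of_real (p i) * (\<Prod>k<n. \<sigma> i k (x ! k) (y ! k)))))"

(* Tr(rho (lambda_{alpha_1} (x) ... (x) lambda_{alpha_n})) *)
definition corr_trace :: "nat \<Rightarrow> (nat \<Rightarrow> nat) \<Rightarrow> (nat \<Rightarrow> nat \<Rightarrow> nat \<Rightarrow> nat \<Rightarrow> complex)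
    \<Rightarrow> (nat list \<Rightarrow> nat list \<Rightarrow> complex) \<Rightarrow> nat list \<Rightarrow> complex" where
  "corr_trace n d L \<rho> \<alpha> =
     (\<Sum>x\<in>basis_idx n d. \<Sum>y\<in>basis_idx n d.
        \<rho> x y * (\<Prod>k<n. gen_ext L (d k) (\<alpha> ! k) (y ! k) (x ! k)))"

(* correlation tensor T_alpha = 2^{-n} Tr(rho lambda_{alpha_1} (x) ... (x) lambda_{alpha_n}),
   used for alpha_k in {1..d_k^2-1}; the trace is real for Hermitian rho *)
definition corr_tensor :: "nat \<Rightarrow> (nat \<Rightarrow> nat) \<Rightarrow> (nat \<Rightarrow> nat \<Rightarrow> nat \<Rightarrow> nat \<Rightarrow> complex)
    \<Rightarrow> (nat list \<Rightarrow> nat list \<Rightarrow> complex) \<Rightarrow> nat list \<Rightarrow> real" where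
  "corr_tensor n d L \<rho> \<alpha> = Re (corr_trace n d L \<rho> \<alpha>) / 2 ^ n"

definition can_corr_tensor :: "nat \<Rightarrow> (nat \<Rightarrow> nat) \<Rightarrow> (nat \<Rightarrow> nat \<Rightarrow> nat \<Rightarrow> nat \<Rightarrow> complex)
    \<Rightarrow> (nat list \<Rightarrow> nat list \<Rightarrow> complex) \<Rightarrow> nat list \<Rightarrow> real" where
  "can_corr_tensor n d L \<rho> \<alpha> =
     (let S = {k. k < n \<and> \<alpha> ! k \<noteq> 0} in
       (\<Prod>k\<in>S. real (d k)) / (2 ^ card S * (\<Prod>k<n. real (d k)))
         * Re (corr_trace n d L \<rho> \<alpha>))"

(* Gram matrix X_k X_k^T of the k-th unfolding X_k of a real n-index tensor X whose
   j-th index ranges over {lo..<d_j^2}; row r of the matrix corresponds to index value lo + r *)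
definition unfold_gram :: "nat \<Rightarrow> (nat \<Rightarrow> nat) \<Rightarrow> nat \<Rightarrow> (nat list \<Rightarrow> real) \<Rightarrow> nat \<Rightarrow> real mat" where
  "unfold_gram n d lo X k =
     (let R = {\<gamma>. length \<gamma> = n \<and> \<gamma> ! k = 0 \<and>
                   (\<forall>j<n. j \<noteq> k \<longrightarrow> lo \<le> \<gamma> ! j \<and> \<gamma> ! j < (d j)^2)}
      in mat ((d k)^2 - lo) ((d k)^2 - lo)
           (\<lambda>(r, s). \<Sum>\<gamma>\<in>R. X (\<gamma>[k := lo + r]) * X (\<gamma>[k := lo + s])))"

(* Tr(M^{p/2}) for a real symmetric positive semidefinite matrix M:
   sum of eigenvalues (with algebraic multiplicity) raised to the power p/2 *)
definition trace_pow_half :: "real mat \<Rightarrow> real \<Rightarrow> real" where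
  "trace_pow_half M p =
     (\<Sum>r\<in>{r. poly (char_poly M) r = 0}. real (order r (char_poly M)) * r powr (p / 2))"

definition tensor_moment :: "nat \<Rightarrow> (nat \<Rightarrow> nat) \<Rightarrow> nat \<Rightarrow> (nat list \<Rightarrow> real) \<Rightarrow> real \<Rightarrow> real" where
  "tensor_moment n d lo X p = Max ((\<lambda>k. trace_pow_half (unfold_gram n d lo X k) p) ` {..<n})"

end

theory Submission
  imports Defs "Jordan_Normal_Form.Schur_Decomposition"
begin

(* Write the separable state as rho = sum_i p_i sigma_i1 (x) ... (x) sigma_in. Its correlation
   tensor is then the convex combination sum_i p_i t_i1 (x) ... (x) t_in of product tensors built
   from the local Bloch vectors t_ik(a) = Tr(sigma_ik lambda_a), and Bessel's inequality in the
   Hilbert-Schmidt orthonormal basis I/sqrt d, lambda_a/sqrt 2, together with Tr sigma^2 <= 1,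
   bounds the norm of each (rescaled) t_ik by the constant c_k of the statement. So every
   unfolding X is a convex combination of rank-one matrices a b^T with |a| |b| <= prod_k c_k,
   and its trace norm sum_j sqrt mu_j (mu_j the eigenvalues of X X^T) is at most prod_k c_k.
   Cauchy-Schwarz, (sum_j mu_j)^2 <= (sum_j mu_j^(3/2)) (sum_j sqrt mu_j), then gives the moment
   inequality for every unfolding, in particular for one attaining the maximal second moment.
   The spectral decomposition of X X^T is obtained from a Schur triangularization by
   Gram-Schmidt orthonormalization. *)

section \<open>Inner products of functions and Gram--Schmidt\<close>

definition cinner_on :: "'a set \<Rightarrow> ('a \<Rightarrow> complex) \<Rightarrow> ('a \<Rightarrow> complex) \<Rightarrow> complex" where
  "cinner_on I u v = (\<Sum>x\<in>I. cnj (u x) * v x)"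

definition orthonormal_on :: "'a set \<Rightarrow> 'b set \<Rightarrow> ('b \<Rightarrow> 'a \<Rightarrow> complex) \<Rightarrow> bool" where
  "orthonormal_on I J e \<longleftrightarrow> (\<forall>j\<in>J. \<forall>k\<in>J. cinner_on I (e j) (e k) = (if j = k then 1 else 0))"

lemma cinner_on_commute: "cinner_on I v u = cnj (cinner_on I u v)"
  unfolding cinner_on_def by (simp add: mult.commute)

lemma cinner_on_self: "cinner_on I u u = of_real (\<Sum>x\<in>I. (cmod (u x))\<^sup>2)"
  unfolding cinner_on_def of_real_sum by (intro sum.cong refl) (metis complex_norm_square mult.commute)

lemma Re_cinner_on_self_nonneg: "Re (cinner_on I u u) \<ge> 0"
  unfolding cinner_on_self by (simp add: sum_nonneg)

lemma cinner_on_self_Re: "cinner_on I u u = of_real (Re (cinner_on I u u))"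
  by (metis cinner_on_self Re_complex_of_real)

lemma Re_cinner_on_self_pos: "cinner_on I u u \<noteq> 0 \<Longrightarrow> Re (cinner_on I u u) > 0"
  by (metis Re_cinner_on_self_nonneg cinner_on_self_Re of_real_0 order_le_less)

lemma cinner_on_self_eq_0:
  assumes "finite I" "cinner_on I u u = 0" "x \<in> I"
  shows "u x = 0"
  using assms unfolding cinner_on_self of_real_eq_0_iff by (simp add: sum_nonneg_eq_0_iff)

lemma cinner_on_of_real_self: "cinner_on I (\<lambda>x. of_real (a x)) (\<lambda>x. of_real (a x)) = of_real (\<Sum>x\<in>I. (a x)\<^sup>2)"
  unfolding cinner_on_self by simp

lemma cinner_on_cong:
  "(\<And>x. x \<in> I \<Longrightarrow> u x = u' x) \<Longrightarrow> (\<And>x. x \<in> I \<Longrightarrow> v x = v' x)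
    \<Longrightarrow> cinner_on I u v = cinner_on I u' v'"
  unfolding cinner_on_def by auto

lemma cinner_on_sum_right: "cinner_on I u (\<lambda>x. \<Sum>j\<in>J. c j * v j x) = (\<Sum>j\<in>J. c j * cinner_on I u (v j))"
  unfolding cinner_on_def by (simp add: sum_distrib_left algebra_simps sum.swap[of _ I])

lemma cinner_on_sum_left: "cinner_on I (\<lambda>x. \<Sum>j\<in>J. c j * v j x) u = (\<Sum>j\<in>J. cnj (c j) * cinner_on I (v j) u)"
  unfolding cinner_on_def by (simp add: sum_distrib_left sum_distrib_right algebra_simps sum.swap[of _ I])

lemma cinner_on_diff_right: "cinner_on I u (\<lambda>x. v x - w x) = cinner_on I u v - cinner_on I u w"
  unfolding cinner_on_def by (simp add: algebra_simps sum_subtractf)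

lemma cinner_on_diff_left: "cinner_on I (\<lambda>x. v x - w x) u = cinner_on I v u - cinner_on I w u"
  unfolding cinner_on_def by (simp add: algebra_simps sum_subtractf)

lemma cinner_on_mult_right: "cinner_on I u (\<lambda>x. c * v x) = c * cinner_on I u v"
  unfolding cinner_on_def sum_distrib_left by (simp add: algebra_simps)

lemma cinner_on_mult_left: "cinner_on I (\<lambda>x. c * v x) u = cnj c * cinner_on I v u"
  unfolding cinner_on_def sum_distrib_left by (simp add: algebra_simps)

lemma orthonormal_onD:
  "orthonormal_on I J e \<Longrightarrow> j \<in> J \<Longrightarrow> k \<in> J \<Longrightarrow> cinner_on I (e j) (e k) = (if j = k then 1 else 0)"
  unfolding orthonormal_on_def by blast

lemma orthonormal_on_subset: "orthonormal_on I J e \<Longrightarrow> J' \<subseteq> J \<Longrightarrow> orthonormal_on I J' e"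
  unfolding orthonormal_on_def by blast

lemma orthonormal_on_lessThan_SucI:
  assumes "orthonormal_on I {..<k} e" "\<And>j. j < k \<Longrightarrow> cinner_on I (e j) (e k) = 0"
    and "cinner_on I (e k) (e k) = 1"
  shows "orthonormal_on I {..<Suc k} e"
  unfolding orthonormal_on_def
proof (intro ballI)
  fix i j assume "i \<in> {..<Suc k}" "j \<in> {..<Suc k}"
  then consider "i < k" "j < k" | "i = k" "j < k" | "i < k" "j = k" | "i = k" "j = k"
    by fastforce
  then show "cinner_on I (e i) (e j) = (if i = j then 1 else 0)"
  proof cases
    case 1
    then show ?thesis
      using orthonormal_onD[OF assms(1)] by simp
  next
    case 2
    then show ?thesis
      using assms(2)[of j] cinner_on_commute[of I "e k" "e j"] by simp
  qed (use assms in auto)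
qed

lemma cinner_on_orthonormal_sum:
  assumes "orthonormal_on I J e" "finite J" "j \<in> J"
  shows "cinner_on I (e j) (\<lambda>x. \<Sum>k\<in>J. c k * e k x) = c j"
proof -
  have "cinner_on I (e j) (\<lambda>x. \<Sum>k\<in>J. c k * e k x) = (\<Sum>k\<in>J. if k = j then c j else 0)"
    unfolding cinner_on_sum_right using assms by (intro sum.cong) (auto simp: orthonormal_onD)
  then show ?thesis
    using assms by simp
qed

lemma bessel_inequality:
  assumes "finite J" "orthonormal_on I J e"
  shows "(\<Sum>j\<in>J. (cmod (cinner_on I (e j) f))\<^sup>2) \<le> Re (cinner_on I f f)"
proof -
  define c where "c j = cinner_on I (e j) f" for j
  define S where "S = (\<lambda>x. \<Sum>j\<in>J. c j * e j x)"
  have Sf: "cinner_on I S f = (\<Sum>j\<in>J. cnj (c j) * c j)"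
    unfolding S_def cinner_on_sum_left c_def ..
  have SS: "cinner_on I S S = (\<Sum>j\<in>J. cnj (c j) * c j)"
    unfolding S_def cinner_on_sum_left using cinner_on_orthonormal_sum[OF assms(2,1)] by simp
  have norm_sq: "(\<Sum>j\<in>J. cnj (c j) * c j) = of_real (\<Sum>j\<in>J. (cmod (c j))\<^sup>2)"
    unfolding of_real_sum by (intro sum.cong refl) (metis complex_norm_square mult.commute)
  have "cinner_on I (\<lambda>x. f x - S x) (\<lambda>x. f x - S x)
      = cinner_on I f f - cinner_on I S f - cnj (cinner_on I S f) + cinner_on I S S"
    unfolding cinner_on_diff_left cinner_on_diff_right by (simp add: cinner_on_commute[of I f S])
  also have "\<dots> = cinner_on I f f - of_real (\<Sum>j\<in>J. (cmod (c j))\<^sup>2)"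
    unfolding Sf SS norm_sq by simp
  finally show ?thesis
    using Re_cinner_on_self_nonneg[of I "\<lambda>x. f x - S x"] unfolding c_def by simp
qed

definition spanned_by ::
    "nat \<Rightarrow> (nat \<Rightarrow> nat \<Rightarrow> complex) \<Rightarrow> nat \<Rightarrow> (nat \<Rightarrow> complex) \<Rightarrow> bool" where
  "spanned_by N F j v \<longleftrightarrow> (\<exists>c. \<forall>x<N. v x = (\<Sum>i<j. c i * F i x))"

lemma spanned_by_base: "i < j \<Longrightarrow> spanned_by N F j (F i)"
  unfolding spanned_by_def by (rule exI[of _ "\<lambda>l. of_bool (l = i)"]) simp

lemma spanned_by_mono: "spanned_by N F j v \<Longrightarrow> j \<le> j' \<Longrightarrow> spanned_by N F j' v"
  unfolding spanned_by_def
proof (elim exE)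
  fix c assume c: "\<forall>x<N. v x = (\<Sum>i<j. c i * F i x)" and "j \<le> j'"
  then have "\<forall>x<N. v x = (\<Sum>i<j'. (if i < j then c i else 0) * F i x)"
    by (simp add: sum.mono_neutral_cong_right[of "{..<j'}" "{..<j}"] subset_eq)
  then show "\<exists>c. \<forall>x<N. v x = (\<Sum>i<j'. c i * F i x)"
    by (rule exI[of _ "\<lambda>i. if i < j then c i else 0"])
qed

lemma spanned_by_cong: "spanned_by N F j v \<Longrightarrow> (\<And>x. x < N \<Longrightarrow> v x = v' x) \<Longrightarrow> spanned_by N F j v'"
  unfolding spanned_by_def by auto

lemma spanned_by_sum:
  assumes "finite L" "\<And>l. l \<in> L \<Longrightarrow> spanned_by N F j (g l)"
  shows "spanned_by N F j (\<lambda>x. \<Sum>l\<in>L. a l * g l x)"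
proof -
  have "\<forall>l\<in>L. \<exists>c. \<forall>x<N. g l x = (\<Sum>i<j. c i * F i x)"
    using assms(2) unfolding spanned_by_def by blast
  then obtain c where c: "\<And>l x. l \<in> L \<Longrightarrow> x < N \<Longrightarrow> g l x = (\<Sum>i<j. c l i * F i x)"
    by metis
  have "(\<Sum>l\<in>L. a l * g l x) = (\<Sum>i<j. (\<Sum>l\<in>L. a l * c l i) * F i x)" if "x < N" for x
  proof -
    have "(\<Sum>l\<in>L. a l * g l x) = (\<Sum>l\<in>L. \<Sum>i<j. a l * c l i * F i x)"
      using c that by (simp add: sum_distrib_left mult.assoc)
    also have "\<dots> = (\<Sum>i<j. (\<Sum>l\<in>L. a l * c l i) * F i x)"
      by (subst sum.swap) (simp add: sum_distrib_right)
    finally show ?thesis .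
  qed
  then show ?thesis
    unfolding spanned_by_def by (intro exI[of _ "\<lambda>i. \<Sum>l\<in>L. a l * c l i"]) blast
qed

lemma spanned_by_trans:
  assumes "spanned_by N F j v" "\<And>i. i < j \<Longrightarrow> spanned_by N G k (F i)"
  shows "spanned_by N G k v"
proof -
  obtain c where "\<forall>x<N. v x = (\<Sum>i<j. c i * F i x)"
    using assms(1) unfolding spanned_by_def by blast
  moreover have "spanned_by N G k (\<lambda>x. \<Sum>i\<in>{..<j}. c i * F i x)"
    using assms(2) by (intro spanned_by_sum) auto
  ultimately show ?thesis
    by (auto elim: spanned_by_cong)
qed

lemma spanned_by_add:
  assumes "spanned_by N F j v" "spanned_by N F j w"
  shows "spanned_by N F j (\<lambda>x. a * v x + b * w x)"
proof -
  have "spanned_by N F j (\<lambda>x. \<Sum>l\<in>{True, False}. (if l then a else b) * (if l then v else w) x)"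
    using assms by (intro spanned_by_sum) auto
  then show ?thesis
    by simp
qed

definition proj_residual ::
    "nat \<Rightarrow> (nat \<Rightarrow> nat \<Rightarrow> complex) \<Rightarrow> nat \<Rightarrow> (nat \<Rightarrow> complex) \<Rightarrow> nat \<Rightarrow> complex" where
  "proj_residual N u k v = (\<lambda>x. v x - (\<Sum>i<k. cinner_on {..<N} (u i) v * u i x))"

definition normalize_on :: "'a set \<Rightarrow> ('a \<Rightarrow> complex) \<Rightarrow> 'a \<Rightarrow> complex" where
  "normalize_on I w = (\<lambda>x. of_real (1 / sqrt (Re (cinner_on I w w))) * w x)"

function gram_schmidt_fun ::
    "nat \<Rightarrow> (nat \<Rightarrow> nat \<Rightarrow> complex) \<Rightarrow> nat \<Rightarrow> nat \<Rightarrow> complex" where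
  "gram_schmidt_fun N p k = normalize_on {..<N}
     (\<lambda>x. p k x - (\<Sum>i<k. cinner_on {..<N} (gram_schmidt_fun N p i) (p k) * gram_schmidt_fun N p i x))"
  by pat_completeness auto
termination by (relation "measure (\<lambda>(N, p, k). k)") auto

declare gram_schmidt_fun.simps[simp del]

lemma gram_schmidt_fun_eq:
  "gram_schmidt_fun N p k = normalize_on {..<N} (proj_residual N (gram_schmidt_fun N p) k (p k))"
  by (subst gram_schmidt_fun.simps) (simp add: proj_residual_def)

lemma proj_residual_orthogonal:
  assumes "orthonormal_on {..<N} {..<k} u" "j < k"
  shows "cinner_on {..<N} (u j) (proj_residual N u k v) = 0"
  unfolding proj_residual_def cinner_on_diff_right
  using cinner_on_orthonormal_sum[OF assms(1) _, of j] assms(2) by simp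

lemma proj_residual_decompose: "v x = proj_residual N u k v x + (\<Sum>i<k. cinner_on {..<N} (u i) v * u i x)"
  unfolding proj_residual_def by simp

lemma normalize_on_self:
  assumes "cinner_on I w w \<noteq> 0"
  shows "cinner_on I (normalize_on I w) (normalize_on I w) = 1"
proof -
  define r where "r = Re (cinner_on I w w)"
  have ww: "cinner_on I w w = of_real r" and r: "r > 0"
    using assms cinner_on_self_Re Re_cinner_on_self_pos unfolding r_def by auto
  have "cinner_on I (normalize_on I w) (normalize_on I w) = of_real (1 / sqrt r * (1 / sqrt r) * r)"
    unfolding normalize_on_def cinner_on_mult_left cinner_on_mult_right ww r_def[symmetric]
    by (simp only: Re_complex_of_real complex_cnj_complex_of_real of_real_mult mult.assoc)
  also have "1 / sqrt r * (1 / sqrt r) * r = 1"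
    using r by (simp add: field_simps)
  finally show ?thesis
    by simp
qed

lemma normalize_on_eq_scale:
  assumes "cinner_on I w w \<noteq> 0"
  obtains c where "c \<noteq> 0" "normalize_on I w = (\<lambda>x. c * w x)"
proof
  have "Re (cinner_on I w w) > 0"
    using assms by (rule Re_cinner_on_self_pos)
  then show "complex_of_real (1 / sqrt (Re (cinner_on I w w))) \<noteq> 0"
    by simp
qed (simp add: normalize_on_def)

lemma proj_residual_nonzero:
  assumes "\<And>i. i < k \<Longrightarrow> spanned_by N p (Suc i) (u i)" and "\<not> spanned_by N p k (p k)"
  shows "cinner_on {..<N} (proj_residual N u k (p k)) (proj_residual N u k (p k)) \<noteq> 0"
proof
  assume "cinner_on {..<N} (proj_residual N u k (p k)) (proj_residual N u k (p k)) = 0"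
  then have "p k x = (\<Sum>i<k. cinner_on {..<N} (u i) (p k) * u i x)" if "x < N" for x
    using proj_residual_decompose[of "p k" x N u k] cinner_on_self_eq_0[of "{..<N}"] that by simp
  then have "spanned_by N u k (p k)"
    unfolding spanned_by_def by (intro exI[of _ "\<lambda>i. cinner_on {..<N} (u i) (p k)"]) simp
  then have "spanned_by N p k (p k)"
    by (rule spanned_by_trans) (auto intro: spanned_by_mono assms(1))
  with assms(2) show False ..
qed

lemma gram_schmidt_fun_orthonormal:
  assumes "\<And>k. k < K \<Longrightarrow> \<not> spanned_by N p k (p k)"
  shows "orthonormal_on {..<N} {..<K} (gram_schmidt_fun N p)
     \<and> (\<forall>i<K. spanned_by N p (Suc i) (gram_schmidt_fun N p i))
     \<and> (\<forall>i<K. spanned_by N (gram_schmidt_fun N p) (Suc i) (p i))"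
  using assms
proof (induction K)
  case 0
  then show ?case
    by (simp add: orthonormal_on_def)
next
  case (Suc k)
  define u where "u = gram_schmidt_fun N p"
  define w where "w = proj_residual N u k (p k)"
  define S where "S x = (\<Sum>i\<in>{..<k}. cinner_on {..<N} (u i) (p k) * u i x)" for x
  have on: "orthonormal_on {..<N} {..<k} u"
    and u_p: "\<And>i. i < k \<Longrightarrow> spanned_by N p (Suc i) (u i)"
    and p_u: "\<And>i. i < k \<Longrightarrow> spanned_by N u (Suc i) (p i)"
    using Suc unfolding u_def by auto
  have p_eq: "p k x = w x + S x" for x
    unfolding w_def S_def by (rule proj_residual_decompose)
  have S_span: "spanned_by N F (Suc k) S" if "\<And>i. i < k \<Longrightarrow> spanned_by N F (Suc k) (u i)" for F
    unfolding S_def using that by (intro spanned_by_sum) auto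
  have "cinner_on {..<N} w w \<noteq> 0"
    unfolding w_def using u_p Suc.prems by (intro proj_residual_nonzero) auto
  then obtain c where c: "c \<noteq> 0" and uk: "u k = (\<lambda>x. c * w x)"
    using normalize_on_eq_scale gram_schmidt_fun_eq[of N p k] unfolding u_def w_def by metis
  have "orthonormal_on {..<N} {..<Suc k} u"
  proof (rule orthonormal_on_lessThan_SucI[OF on])
    show "cinner_on {..<N} (u j) (u k) = 0" if "j < k" for j
      unfolding uk cinner_on_mult_right w_def using proj_residual_orthogonal[OF on that] by simp
    show "cinner_on {..<N} (u k) (u k) = 1"
      using normalize_on_self[OF \<open>cinner_on {..<N} w w \<noteq> 0\<close>] gram_schmidt_fun_eq[of N p k]
      unfolding u_def w_def by simp
  qed
  moreover have "spanned_by N p (Suc k) (u k)"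
  proof -
    have "spanned_by N p (Suc k) (\<lambda>x. c * p k x + (- c) * S x)"
      by (intro spanned_by_add spanned_by_base S_span) (auto intro: spanned_by_mono u_p)
    then show ?thesis
      unfolding uk p_eq by (simp add: algebra_simps)
  qed
  moreover have "spanned_by N u (Suc k) (p k)"
  proof -
    have "spanned_by N u (Suc k) (\<lambda>x. (1 / c) * u k x + 1 * S x)"
      by (intro spanned_by_add spanned_by_base S_span) auto
    then show ?thesis
      unfolding uk p_eq using c by simp
  qed
  ultimately show ?case
    using u_p p_u unfolding u_def by (auto simp: less_Suc_eq)
qed

section \<open>Spectral theorem for Hermitian matrices\<close>

lemma index_mult_mat_sum:
  "i < dim_row A \<Longrightarrow> j < dim_col B \<Longrightarrow> dim_col A = dim_row B
    \<Longrightarrow> (A * B) $$ (i, j) = (\<Sum>y<dim_row B. A $$ (i, y) * B $$ (y, j))"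
  by (simp add: scalar_prod_def lessThan_atLeast0)

declare index_mult_mat(1)[simp del] index_mult_mat_sum[simp]

lemma inverse_mat_cols_not_spanned:
  fixes P Q :: "complex mat"
  assumes P: "P \<in> carrier_mat N N" and Q: "Q \<in> carrier_mat N N" and QP: "Q * P = 1\<^sub>m N"
    and k: "k < N"
  shows "\<not> spanned_by N (\<lambda>j x. P $$ (x, j)) k (\<lambda>x. P $$ (x, k))"
proof
  assume "spanned_by N (\<lambda>j x. P $$ (x, j)) k (\<lambda>x. P $$ (x, k))"
  then obtain e where e: "\<And>x. x < N \<Longrightarrow> P $$ (x, k) = (\<Sum>l<k. e l * P $$ (x, l))"
    unfolding spanned_by_def by blast
  have "(Q * P) $$ (k, k) = (\<Sum>x<N. Q $$ (k, x) * P $$ (x, k))"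
    using P Q k by simp
  also have "\<dots> = (\<Sum>x<N. \<Sum>l<k. e l * (Q $$ (k, x) * P $$ (x, l)))"
    using e by (intro sum.cong refl) (simp add: sum_distrib_left algebra_simps)
  also have "\<dots> = (\<Sum>l<k. e l * (\<Sum>x<N. Q $$ (k, x) * P $$ (x, l)))"
    by (subst sum.swap) (simp add: sum_distrib_left)
  also have "\<dots> = (\<Sum>l<k. e l * (Q * P) $$ (k, l))"
    using P Q k by (intro sum.cong refl) simp
  also have "\<dots> = 0"
    using QP k by simp
  finally show False
    using QP k by simp
qed

definition mat_app :: "nat \<Rightarrow> complex mat \<Rightarrow> (nat \<Rightarrow> complex) \<Rightarrow> nat \<Rightarrow> complex" where
  "mat_app N A v = (\<lambda>x. \<Sum>y<N. A $$ (x, y) * v y)"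

lemma mat_app_spanned_by:
  assumes "spanned_by N F j v" "\<And>l. l < j \<Longrightarrow> spanned_by N G k (mat_app N A (F l))"
  shows "spanned_by N G k (mat_app N A v)"
proof -
  obtain c where c: "\<And>y. y < N \<Longrightarrow> v y = (\<Sum>l<j. c l * F l y)"
    using assms(1) unfolding spanned_by_def by blast
  have "mat_app N A v = (\<lambda>x. \<Sum>l\<in>{..<j}. c l * mat_app N A (F l) x)"
  proof
    fix x
    have "mat_app N A v x = (\<Sum>y<N. \<Sum>l<j. c l * (A $$ (x, y) * F l y))"
      unfolding mat_app_def using c by (intro sum.cong refl) (auto simp: sum_distrib_left algebra_simps)
    also have "\<dots> = (\<Sum>l\<in>{..<j}. c l * mat_app N A (F l) x)"
      unfolding mat_app_def by (subst sum.swap) (simp add: sum_distrib_left)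
    finally show "mat_app N A v x = (\<Sum>l\<in>{..<j}. c l * mat_app N A (F l) x)" .
  qed
  moreover have "spanned_by N G k (\<lambda>x. \<Sum>l\<in>{..<j}. c l * mat_app N A (F l) x)"
    using assms(2) by (intro spanned_by_sum) auto
  ultimately show ?thesis
    by simp
qed

lemma cinner_on_mat_app_hermitian:
  assumes "hermitian_op N (\<lambda>i j. A $$ (i, j))"
  shows "cinner_on {..<N} u (mat_app N A v) = cinner_on {..<N} (mat_app N A u) v"
proof -
  have "cinner_on {..<N} u (mat_app N A v) = (\<Sum>x<N. \<Sum>y<N. cnj (u x) * (A $$ (x, y) * v y))"
    unfolding cinner_on_def mat_app_def by (simp add: sum_distrib_left)
  also have "\<dots> = (\<Sum>y<N. \<Sum>x<N. cnj (A $$ (y, x) * u x) * v y)"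
  proof (subst sum.swap, intro sum.cong refl)
    fix x y assume "x \<in> {..<N}" "y \<in> {..<N}"
    then have "A $$ (x, y) = cnj (A $$ (y, x))"
      using assms unfolding hermitian_op_def by blast
    then show "cnj (u x) * (A $$ (x, y) * v y) = cnj (A $$ (y, x) * u x) * v y"
      by simp
  qed
  also have "\<dots> = cinner_on {..<N} (mat_app N A u) v"
    unfolding cinner_on_def mat_app_def by (simp add: sum_distrib_right)
  finally show ?thesis .
qed

lemma orthonormal_unitary_mat:
  fixes u :: "nat \<Rightarrow> nat \<Rightarrow> complex"
  assumes "orthonormal_on {..<N} {..<N} u"
  defines "U \<equiv> mat N N (\<lambda>(x, j). u j x)" and "U' \<equiv> mat N N (\<lambda>(j, x). cnj (u j x))"
  shows "U' * U = 1\<^sub>m N" "U * U' = 1\<^sub>m N"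
proof -
  show UU: "U' * U = 1\<^sub>m N"
  proof (rule eq_matI)
    fix i j assume "i < dim_row (1\<^sub>m N)" "j < dim_col (1\<^sub>m N)"
    then show "(U' * U) $$ (i, j) = 1\<^sub>m N $$ (i, j)"
      using orthonormal_onD[OF assms(1), of i j] by (simp add: U_def U'_def cinner_on_def)
  qed (auto simp: U_def U'_def)
  show "U * U' = 1\<^sub>m N"
    by (rule mat_mult_left_right_inverse[OF _ _ UU]) (auto simp: U_def U'_def)
qed

lemma orthonormal_expansion:
  fixes u :: "nat \<Rightarrow> nat \<Rightarrow> complex"
  assumes "orthonormal_on {..<N} {..<N} u" "x < N"
  shows "v x = (\<Sum>i<N. cinner_on {..<N} (u i) v * u i x)"
proof -
  define U where "U = mat N N (\<lambda>(x, j). u j x)"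
  define U' where "U' = mat N N (\<lambda>(j, x). cnj (u j x))"
  have "(\<Sum>i<N. cinner_on {..<N} (u i) v * u i x) = (\<Sum>i<N. \<Sum>y<N. u i x * cnj (u i y) * v y)"
    unfolding cinner_on_def sum_distrib_right by (simp add: algebra_simps)
  also have "\<dots> = (\<Sum>y<N. (\<Sum>i<N. u i x * cnj (u i y)) * v y)"
    by (subst sum.swap) (simp add: sum_distrib_right)
  also have "\<dots> = (\<Sum>y<N. (U * U') $$ (x, y) * v y)"
    using assms(2) by (intro sum.cong refl) (simp add: U_def U'_def)
  also have "\<dots> = v x"
    using orthonormal_unitary_mat(2)[OF assms(1)] assms(2) by (simp add: U_def U'_def of_bool_def[symmetric])
  finally show ?thesis ..
qed

lemma complex_schur_intertwining:
  fixes A :: "complex mat"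
  assumes A: "A \<in> carrier_mat N N"
  obtains B P Q where "B \<in> carrier_mat N N" "P \<in> carrier_mat N N" "Q \<in> carrier_mat N N"
    "Q * P = 1\<^sub>m N" "A * P = P * B" "upper_triangular B"
proof -
  obtain es where "char_poly A = (\<Prod>a\<leftarrow>es. [:- a, 1:])"
    using char_poly_factorized[OF A] by blast
  moreover obtain B P Q where "schur_decomposition A es = (B, P, Q)"
    by (cases "schur_decomposition A es") auto
  ultimately have "similar_mat_wit A B P Q" and ut: "upper_triangular B"
    using schur_decomposition[OF A] by blast+
  then have B: "B \<in> carrier_mat N N" and P: "P \<in> carrier_mat N N" and Q: "Q \<in> carrier_mat N N"
    and QP: "Q * P = 1\<^sub>m N" and APBQ: "A = P * B * Q"
    using A unfolding similar_mat_wit_def Let_def by auto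
  have "A * P = P * B * (Q * P)"
    unfolding APBQ using P B Q by (simp add: assoc_mult_mat[of _ N N _ N _ N])
  then have "A * P = P * B"
    unfolding QP using P B by (metis mult_carrier_mat right_mult_one_mat)
  with B P Q QP ut show ?thesis
    using that by blast
qed

lemma mat_app_col_upper_triangular:
  fixes A B P :: "complex mat"
  assumes "A \<in> carrier_mat N N" "B \<in> carrier_mat N N" "P \<in> carrier_mat N N"
    and AP: "A * P = P * B" and "upper_triangular B" and "l < N"
  shows "spanned_by N (\<lambda>j x. P $$ (x, j)) (Suc l) (mat_app N A (\<lambda>x. P $$ (x, l)))"
  unfolding spanned_by_def
proof (intro exI[of _ "\<lambda>i. B $$ (i, l)"] allI impI)
  fix x assume "x < N"
  then have "mat_app N A (\<lambda>x. P $$ (x, l)) x = (P * B) $$ (x, l)"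
    unfolding AP[symmetric] using assms(1-3,6) by (simp add: mat_app_def)
  also have "\<dots> = (\<Sum>i<N. P $$ (x, i) * B $$ (i, l))"
    using assms(1-3,6) \<open>x < N\<close> by simp
  also have "\<dots> = (\<Sum>i<Suc l. P $$ (x, i) * B $$ (i, l))"
    using assms by (intro sum.mono_neutral_right) (auto simp: upper_triangular_def)
  finally show "mat_app N A (\<lambda>x. P $$ (x, l)) x = (\<Sum>i<Suc l. B $$ (i, l) * P $$ (x, i))"
    by (simp add: mult.commute)
qed

lemma unitary_triangularization:
  fixes A :: "complex mat"
  assumes A: "A \<in> carrier_mat N N"
  obtains u where "orthonormal_on {..<N} {..<N} u"
    "\<And>j. j < N \<Longrightarrow> spanned_by N u (Suc j) (mat_app N A (u j))"
proof -
  obtain B P Q where B: "B \<in> carrier_mat N N" and P: "P \<in> carrier_mat N N"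
    and Q: "Q \<in> carrier_mat N N" and QP: "Q * P = 1\<^sub>m N" and AP: "A * P = P * B"
    and ut: "upper_triangular B"
    using complex_schur_intertwining[OF A] by blast
  define p where "p j x = P $$ (x, j)" for j x
  define u where "u = gram_schmidt_fun N p"
  have "orthonormal_on {..<N} {..<N} u" and u_p: "\<And>i. i < N \<Longrightarrow> spanned_by N p (Suc i) (u i)"
    and p_u: "\<And>i. i < N \<Longrightarrow> spanned_by N u (Suc i) (p i)"
    using gram_schmidt_fun_orthonormal[of N N p] inverse_mat_cols_not_spanned[OF P Q QP]
    unfolding u_def p_def by auto
  moreover have "spanned_by N u (Suc j) (mat_app N A (u j))" if "j < N" for j
  proof (rule mat_app_spanned_by[OF u_p[OF that]])
    fix l assume "l < Suc j"
    with that have "spanned_by N p (Suc j) (mat_app N A (p l))"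
      unfolding p_def by (intro spanned_by_mono[OF mat_app_col_upper_triangular[OF A B P AP ut]]) auto
    moreover have "spanned_by N u (Suc j) (p i)" if "i < Suc j" for i
      by (rule spanned_by_mono[OF p_u]) (use that \<open>j < N\<close> in auto)
    ultimately show "spanned_by N u (Suc j) (mat_app N A (p l))"
      by (rule spanned_by_trans)
  qed
  ultimately show ?thesis
    using that by blast
qed

lemma triangular_hermitian_off_diagonal:
  assumes herm: "hermitian_op N (\<lambda>i j. A $$ (i, j))" and on: "orthonormal_on {..<N} {..<N} u"
    and tri: "\<And>j. j < N \<Longrightarrow> spanned_by N u (Suc j) (mat_app N A (u j))"
    and ij: "i \<noteq> j" "i < N" "j < N"
  shows "cinner_on {..<N} (u i) (mat_app N A (u j)) = 0"
proof -
  have lower: "cinner_on {..<N} (u i) (mat_app N A (u j)) = 0" if ji: "j < i" "i < N" for i j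
  proof -
    obtain c where "\<And>x. x < N \<Longrightarrow> mat_app N A (u j) x = (\<Sum>l<Suc j. c l * u l x)"
      using tri[of j] ji unfolding spanned_by_def by auto
    then have "cinner_on {..<N} (u i) (mat_app N A (u j))
        = cinner_on {..<N} (u i) (\<lambda>x. \<Sum>l\<in>{..<Suc j}. c l * u l x)"
      by (intro cinner_on_cong) auto
    also have "\<dots> = 0"
      unfolding cinner_on_sum_right using ji by (intro sum.neutral) (auto simp: orthonormal_onD[OF on])
    finally show ?thesis .
  qed
  show ?thesis
  proof (cases "j < i")
    case False
    have "cinner_on {..<N} (u i) (mat_app N A (u j)) = cinner_on {..<N} (mat_app N A (u i)) (u j)"
      by (rule cinner_on_mat_app_hermitian[OF herm])
    also have "\<dots> = cnj (cinner_on {..<N} (u j) (mat_app N A (u i)))"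
      by (rule cinner_on_commute)
    also have "\<dots> = 0"
      using lower[of i j] False ij by simp
    finally show ?thesis .
  qed (use lower ij in auto)
qed

lemma hermitian_eigenbasis:
  assumes A: "A \<in> carrier_mat N N" and herm: "hermitian_op N (\<lambda>i j. A $$ (i, j))"
  obtains u \<nu> where "orthonormal_on {..<N} {..<N} u"
    "\<And>j x. j < N \<Longrightarrow> x < N \<Longrightarrow> mat_app N A (u j) x = \<nu> j * u j x"
proof -
  obtain u where on: "orthonormal_on {..<N} {..<N} u"
    and tri: "\<And>j. j < N \<Longrightarrow> spanned_by N u (Suc j) (mat_app N A (u j))"
    using unitary_triangularization[OF A] by metis
  define \<nu> where "\<nu> j = cinner_on {..<N} (u j) (mat_app N A (u j))" for j
  have "mat_app N A (u j) x = \<nu> j * u j x" if "j < N" "x < N" for j x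
  proof -
    have "mat_app N A (u j) x = (\<Sum>i<N. cinner_on {..<N} (u i) (mat_app N A (u j)) * u i x)"
      by (rule orthonormal_expansion[OF on \<open>x < N\<close>])
    also have "\<dots> = (\<Sum>i<N. if i = j then \<nu> j * u j x else 0)"
      using that triangular_hermitian_off_diagonal[OF herm on tri] unfolding \<nu>_def
      by (intro sum.cong refl) auto
    also have "\<dots> = \<nu> j * u j x"
      using that by simp
    finally show ?thesis .
  qed
  then show ?thesis
    by (rule that[OF on])
qed

lemma char_poly_orthonormal_eigenbasis:
  fixes A :: "complex mat"
  assumes A: "A \<in> carrier_mat N N" and on: "orthonormal_on {..<N} {..<N} u"
    and eig: "\<And>j x. j < N \<Longrightarrow> x < N \<Longrightarrow> mat_app N A (u j) x = \<nu> j * u j x"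
  shows "char_poly A = (\<Prod>j\<leftarrow>[0..<N]. [:- \<nu> j, 1:])"
proof -
  define U where "U = mat N N (\<lambda>(x, j). u j x)"
  define U' where "U' = mat N N (\<lambda>(j, x). cnj (u j x))"
  define D where "D = mat N N (\<lambda>(i, j). if i = j then \<nu> i else 0)"
  have U: "U \<in> carrier_mat N N" and U': "U' \<in> carrier_mat N N" and D: "D \<in> carrier_mat N N"
    unfolding U_def U'_def D_def by auto
  have UU: "U' * U = 1\<^sub>m N" "U * U' = 1\<^sub>m N"
    using orthonormal_unitary_mat[OF on] unfolding U_def U'_def by auto
  have AU: "A * U = U * D"
  proof (rule eq_matI)
    fix x j assume "x < dim_row (U * D)" "j < dim_col (U * D)"
    then have xj: "x < N" "j < N"
      using U D by auto
    have "(A * U) $$ (x, j) = \<nu> j * u j x"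
      using A xj eig[OF xj(2,1)] by (simp add: U_def mat_app_def)
    also have "\<dots> = (U * D) $$ (x, j)"
      using xj by (simp add: U_def D_def if_distrib mult.commute cong: if_cong)
    finally show "(A * U) $$ (x, j) = (U * D) $$ (x, j)" .
  qed (use A U D in auto)
  have "A = U * D * U'"
  proof -
    have "A = A * (U * U')"
      using A by (simp add: UU)
    also have "\<dots> = U * D * U'"
      using A U U' by (simp flip: AU add: assoc_mult_mat[of _ N N _ N _ N])
    finally show ?thesis .
  qed
  then have "similar_mat_wit A D U U'"
    using UU A U U' D by (intro similar_mat_witI)
  then have "similar_mat A D"
    unfolding similar_mat_def by blast
  then have "char_poly A = char_poly D"
    by (rule char_poly_similar)
  also have "\<dots> = (\<Prod>a\<leftarrow>diag_mat D. [:- a, 1:])"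
    by (rule char_poly_upper_triangular[OF D]) (auto simp: upper_triangular_def D_def)
  also have "diag_mat D = map \<nu> [0..<N]"
    unfolding diag_mat_def D_def by auto
  finally show ?thesis
    by (simp add: comp_def)
qed

section \<open>Gram matrices and the trace norm\<close>

lemma sum_mult_square_le:
  fixes a b :: "'a \<Rightarrow> real"
  shows "(\<Sum>j\<in>J. a j * b j)\<^sup>2 \<le> (\<Sum>j\<in>J. (a j)\<^sup>2) * (\<Sum>j\<in>J. (b j)\<^sup>2)"
proof (cases "finite J \<and> (\<Sum>j\<in>J. (b j)\<^sup>2) \<noteq> 0")
  case False
  have "(\<Sum>j\<in>J. a j * b j) = 0"
  proof (cases "finite J")
    case True
    with False have "\<forall>j\<in>J. b j = 0"
      by (simp add: sum_nonneg_eq_0_iff)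
    then show ?thesis
      by simp
  qed simp
  then show ?thesis
    by (simp add: sum_nonneg mult_nonneg_nonneg)
next
  case True
  define A where "A = (\<Sum>j\<in>J. (a j)\<^sup>2)"
  define B where "B = (\<Sum>j\<in>J. (b j)\<^sup>2)"
  define S where "S = (\<Sum>j\<in>J. a j * b j)"
  have "B > 0"
    using True unfolding B_def by (metis less_eq_real_def sum_nonneg zero_le_power2)
  have "0 \<le> (\<Sum>j\<in>J. (B * a j - S * b j)\<^sup>2)"
    by (simp add: sum_nonneg)
  also have "\<dots> = (\<Sum>j\<in>J. B\<^sup>2 * (a j)\<^sup>2 - 2 * B * S * (a j * b j) + S\<^sup>2 * (b j)\<^sup>2)"
    by (intro sum.cong refl) (simp add: power2_eq_square algebra_simps)
  also have "\<dots> = B\<^sup>2 * A - 2 * B * S * S + S\<^sup>2 * B"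
    by (simp only: sum.distrib sum_subtractf flip: sum_distrib_left) (simp add: A_def B_def S_def)
  also have "\<dots> = B * (B * A - S\<^sup>2)"
    by (simp add: power2_eq_square algebra_simps)
  finally show ?thesis
    using \<open>B > 0\<close> unfolding A_def B_def S_def by (simp add: zero_le_mult_iff mult.commute)
qed

lemma sum_mult_le_sqrt:
  fixes a b :: "'a \<Rightarrow> real"
  shows "(\<Sum>j\<in>J. a j * b j) \<le> sqrt (\<Sum>j\<in>J. (a j)\<^sup>2) * sqrt (\<Sum>j\<in>J. (b j)\<^sup>2)"
  using real_sqrt_le_mono[OF sum_mult_square_le[of a b J]]
  by (simp add: real_sqrt_mult)

lemma sum_square_le_powr_three_halves:
  assumes "\<And>j. j \<in> J \<Longrightarrow> \<mu> j \<ge> 0"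
  shows "(\<Sum>j\<in>J. \<mu> j)\<^sup>2 \<le> (\<Sum>j\<in>J. \<mu> j powr (3 / 2)) * (\<Sum>j\<in>J. sqrt (\<mu> j))"
proof -
  have "(\<Sum>j\<in>J. \<mu> j) = (\<Sum>j\<in>J. \<mu> j powr (3 / 4) * \<mu> j powr (1 / 4))"
    using assms by (intro sum.cong refl) (simp flip: powr_add)
  moreover have "(\<mu> j powr (3 / 4))\<^sup>2 = \<mu> j powr (3 / 2)" for j
    by (simp add: power2_eq_square flip: powr_add)
  moreover have "(\<mu> j powr (1 / 4))\<^sup>2 = sqrt (\<mu> j)" if "j \<in> J" for j
    using assms[OF that] by (simp add: power2_eq_square powr_half_sqrt flip: powr_add)
  ultimately show ?thesis
    using sum_mult_square_le[of "\<lambda>j. \<mu> j powr (3 / 4)" "\<lambda>j. \<mu> j powr (1 / 4)" J] by simp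
qed

lemma trace_pow_half_eigenvalues:
  assumes "char_poly M = (\<Prod>j\<leftarrow>[0..<N]. [:- \<mu> j, 1:])"
  shows "trace_pow_half M q = (\<Sum>j<N. \<mu> j powr (q / 2))"
proof -
  have roots: "{r. poly (char_poly M) r = 0} = \<mu> ` {..<N}"
    unfolding assms poly_prod_list_zero_iff by auto
  have "Polynomial.order r (char_poly M) = (\<Sum>j\<leftarrow>[0..<N]. Polynomial.order r [:- \<mu> j, 1:])" for r
    unfolding assms by (subst order_prod_list) (auto simp: comp_def)
  also have "(\<Sum>j\<leftarrow>[0..<N]. Polynomial.order r [:- \<mu> j, 1:]) = card {j. j < N \<and> \<mu> j = r}" for r
    by (simp add: order_linear' sum_list_distinct_conv_sum_set atLeast0LessThan lessThan_def
        Collect_conj_eq flip: of_bool_def)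
  finally have order: "Polynomial.order r (char_poly M) = card {j. j < N \<and> \<mu> j = r}" for r .
  have "(\<Sum>j<N. \<mu> j powr (q / 2)) = (\<Sum>r\<in>\<mu> ` {..<N}. \<Sum>j\<in>{j \<in> {..<N}. \<mu> j = r}. \<mu> j powr (q / 2))"
    by (rule sum.image_gen) simp
  also have "\<dots> = (\<Sum>r\<in>\<mu> ` {..<N}. real (card {j. j < N \<and> \<mu> j = r}) * r powr (q / 2))"
    by (intro sum.cong refl) simp
  finally show ?thesis
    unfolding trace_pow_half_def roots order by simp
qed

definition gram_mat :: "nat \<Rightarrow> 'b set \<Rightarrow> (nat \<Rightarrow> 'b \<Rightarrow> real) \<Rightarrow> real mat" where
  "gram_mat N R X = mat N N (\<lambda>(r, s). \<Sum>\<gamma>\<in>R. X r \<gamma> * X s \<gamma>)"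

definition transpose_app ::
    "nat \<Rightarrow> (nat \<Rightarrow> 'b \<Rightarrow> real) \<Rightarrow> (nat \<Rightarrow> complex) \<Rightarrow> 'b \<Rightarrow> complex" where
  "transpose_app N X u = (\<lambda>\<gamma>. \<Sum>r<N. of_real (X r \<gamma>) * u r)"

lemma cinner_on_transpose_app:
  "cinner_on R (transpose_app N X u) (transpose_app N X v)
     = cinner_on {..<N} u (mat_app N (map_mat of_real (gram_mat N R X)) v)"
proof -
  have "cinner_on R (transpose_app N X u) (transpose_app N X v)
      = (\<Sum>\<gamma>\<in>R. \<Sum>r<N. \<Sum>s<N. cnj (u r) * (of_real (X r \<gamma> * X s \<gamma>) * v s))"
    unfolding cinner_on_def transpose_app_def cnj_sum sum_product by (simp add: algebra_simps)
  also have "\<dots> = (\<Sum>r<N. \<Sum>s<N. \<Sum>\<gamma>\<in>R. cnj (u r) * (of_real (X r \<gamma> * X s \<gamma>) * v s))"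
    by (simp only: sum.swap[of _ R])
  also have "\<dots> = cinner_on {..<N} u (mat_app N (map_mat of_real (gram_mat N R X)) v)"
    unfolding cinner_on_def mat_app_def gram_mat_def
    by (simp add: sum_distrib_left sum_distrib_right of_real_sum)
  finally show ?thesis .
qed

interpretation of_real_poly_hom: map_poly_inj_idom_hom "of_real :: real \<Rightarrow> complex"
  by unfold_locales

lemma char_poly_of_real_factorization:
  fixes M :: "real mat"
  assumes "M \<in> carrier_mat N N"
    and "char_poly (map_mat complex_of_real M) = (\<Prod>j\<leftarrow>js. [:- complex_of_real (\<mu> j), 1:])"
  shows "char_poly M = (\<Prod>j\<leftarrow>js. [:- \<mu> j, 1:])"
proof (rule of_real_poly_hom.injectivity)
  have "map_poly complex_of_real (char_poly M) = char_poly (map_mat complex_of_real M)"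
    by (rule of_real_hom.char_poly_hom[OF assms(1), symmetric])
  also have "\<dots> = map_poly complex_of_real (\<Prod>j\<leftarrow>js. [:- \<mu> j, 1:])"
    unfolding assms(2) by (simp add: of_real_poly_hom.hom_prod_list comp_def)
  finally show "map_poly complex_of_real (char_poly M) = map_poly complex_of_real (\<Prod>j\<leftarrow>js. [:- \<mu> j, 1:])" .
qed

lemma gram_mat_singular_system:
  fixes X :: "nat \<Rightarrow> 'b \<Rightarrow> real"
  obtains u \<mu> where "orthonormal_on {..<N} {..<N} u" "\<And>j. j < N \<Longrightarrow> \<mu> j \<ge> 0"
    "\<And>i j. i < N \<Longrightarrow> j < N \<Longrightarrow> cinner_on R (transpose_app N X (u i)) (transpose_app N X (u j))
        = (if i = j then of_real (\<mu> j) else 0)"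
    "char_poly (gram_mat N R X) = (\<Prod>j\<leftarrow>[0..<N]. [:- \<mu> j, 1:])"
proof -
  define G where "G = map_mat (of_real :: real \<Rightarrow> complex) (gram_mat N R X)"
  have gram: "gram_mat N R X \<in> carrier_mat N N"
    unfolding gram_mat_def by simp
  then have G: "G \<in> carrier_mat N N"
    unfolding G_def by simp
  have "hermitian_op N (\<lambda>i j. G $$ (i, j))"
    unfolding hermitian_op_def G_def gram_mat_def by (simp add: mult.commute)
  then obtain u \<nu> where on: "orthonormal_on {..<N} {..<N} u"
    and eig: "\<And>j x. j < N \<Longrightarrow> x < N \<Longrightarrow> mat_app N G (u j) x = \<nu> j * u j x"
    using hermitian_eigenbasis[OF G] by metis
  have sv: "cinner_on R (transpose_app N X (u i)) (transpose_app N X (u j)) = (if i = j then \<nu> j else 0)"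
    if "i < N" "j < N" for i j
  proof -
    have "cinner_on R (transpose_app N X (u i)) (transpose_app N X (u j))
        = cinner_on {..<N} (u i) (\<lambda>x. \<nu> j * u j x)"
      unfolding cinner_on_transpose_app G_def[symmetric] using eig that by (intro cinner_on_cong) auto
    then show ?thesis
      using orthonormal_onD[OF on, of i j] that by (simp add: cinner_on_mult_right)
  qed
  define \<mu> where "\<mu> j = Re (\<nu> j)" for j
  have \<nu>: "\<nu> j = of_real (\<mu> j)" and \<mu>: "\<mu> j \<ge> 0" if "j < N" for j
    using sv[OF that that] cinner_on_self_Re[of R "transpose_app N X (u j)"]
      Re_cinner_on_self_nonneg[of R "transpose_app N X (u j)"]
    unfolding \<mu>_def by auto
  moreover have "char_poly (gram_mat N R X) = (\<Prod>j\<leftarrow>[0..<N]. [:- \<mu> j, 1:])"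
  proof (rule char_poly_of_real_factorization[OF gram])
    have "char_poly (map_mat complex_of_real (gram_mat N R X)) = (\<Prod>j\<leftarrow>[0..<N]. [:- \<nu> j, 1:])"
      unfolding G_def[symmetric] by (rule char_poly_orthonormal_eigenbasis[OF G on eig])
    also have "\<dots> = (\<Prod>j\<leftarrow>[0..<N]. [:- complex_of_real (\<mu> j), 1:])"
      using \<nu> by (intro arg_cong[of _ _ prod_list] map_cong) auto
    finally show "char_poly (map_mat complex_of_real (gram_mat N R X))
        = (\<Prod>j\<leftarrow>[0..<N]. [:- complex_of_real (\<mu> j), 1:])" .
  qed
  ultimately show ?thesis
    by (intro that[OF on, of \<mu>]) (simp_all add: sv \<mu>)
qed

lemma sum_coeff_products_le:
  assumes "finite J" "orthonormal_on I J e" "orthonormal_on I' J e'"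
  shows "(\<Sum>j\<in>J. cmod (cinner_on I (e j) f) * cmod (cinner_on I' (e' j) g))
    \<le> sqrt (Re (cinner_on I f f)) * sqrt (Re (cinner_on I' g g))"
proof -
  have "(\<Sum>j\<in>J. cmod (cinner_on I (e j) f) * cmod (cinner_on I' (e' j) g))
      \<le> sqrt (\<Sum>j\<in>J. (cmod (cinner_on I (e j) f))\<^sup>2) * sqrt (\<Sum>j\<in>J. (cmod (cinner_on I' (e' j) g))\<^sup>2)"
    by (rule sum_mult_le_sqrt)
  also have "\<dots> \<le> sqrt (Re (cinner_on I f f)) * sqrt (Re (cinner_on I' g g))"
    using bessel_inequality[OF assms(1,2)] bessel_inequality[OF assms(1,3)]
    by (intro mult_mono real_sqrt_le_mono) (auto intro: sum_nonneg Re_cinner_on_self_nonneg)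
  finally show ?thesis .
qed

lemma transpose_app_convex_rank_one:
  assumes "\<And>r \<gamma>. r < N \<Longrightarrow> \<gamma> \<in> R \<Longrightarrow> X r \<gamma> = (\<Sum>i<m. p i * a i r * b i \<gamma>)"
    and "\<gamma> \<in> R"
  shows "transpose_app N X v \<gamma>
    = (\<Sum>i<m. of_real (p i) * cnj (cinner_on {..<N} v (\<lambda>r. of_real (a i r))) * of_real (b i \<gamma>))"
proof -
  have "transpose_app N X v \<gamma> = (\<Sum>r<N. \<Sum>i<m. of_real (p i) * of_real (b i \<gamma>) * (of_real (a i r) * v r))"
    unfolding transpose_app_def using assms
    by (intro sum.cong refl) (simp add: of_real_sum sum_distrib_left sum_distrib_right algebra_simps)
  also have "\<dots> = (\<Sum>i<m. of_real (p i) * of_real (b i \<gamma>) * (\<Sum>r<N. of_real (a i r) * v r))"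
    by (subst sum.swap) (simp add: sum_distrib_left)
  finally show ?thesis
    unfolding cinner_on_def by (simp add: cnj_sum ac_simps)
qed

lemma orthonormal_on_normalize_orthogonal:
  assumes "\<And>i j. i \<in> J \<Longrightarrow> j \<in> J \<Longrightarrow> cinner_on I (w i) (w j) = (if i = j then of_real (\<mu> j) else 0)"
    and "\<And>j. j \<in> J \<Longrightarrow> \<mu> j > 0"
  shows "orthonormal_on I J (\<lambda>j x. of_real (1 / sqrt (\<mu> j)) * w j x)"
  unfolding orthonormal_on_def cinner_on_mult_left cinner_on_mult_right
  using assms by (auto simp flip: of_real_mult dest: assms(2) simp: less_imp_le)

(* The trace norm sum_j sqrt mu_j of X is convex in X and at most |a| |b| on a rank-one matrix a b^T;
   here sqrt mu_j is computed as the inner product of X^T u_j with its normalization e_j. *)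
lemma sum_sqrt_singular_values_le:
  fixes X :: "nat \<Rightarrow> 'b \<Rightarrow> real"
  assumes on: "orthonormal_on {..<N} {..<N} u" and \<mu>: "\<And>j. j < N \<Longrightarrow> \<mu> j \<ge> 0"
    and sv: "\<And>i j. i < N \<Longrightarrow> j < N \<Longrightarrow>
      cinner_on R (transpose_app N X (u i)) (transpose_app N X (u j)) = (if i = j then of_real (\<mu> j) else 0)"
    and X: "\<And>r \<gamma>. r < N \<Longrightarrow> \<gamma> \<in> R \<Longrightarrow> X r \<gamma> = (\<Sum>i<m. p i * a i r * b i \<gamma>)"
    and p: "\<And>i. i < m \<Longrightarrow> p i \<ge> 0" "(\<Sum>i<m. p i) = 1"
    and C: "\<And>i. i < m \<Longrightarrow> sqrt (\<Sum>r<N. (a i r)\<^sup>2) * sqrt (\<Sum>\<gamma>\<in>R. (b i \<gamma>)\<^sup>2) \<le> C"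
  shows "(\<Sum>j<N. sqrt (\<mu> j)) \<le> C"
proof -
  define J where "J = {j. j < N \<and> \<mu> j > 0}"
  define e where "e j = (\<lambda>\<gamma>. of_real (1 / sqrt (\<mu> j)) * transpose_app N X (u j) \<gamma>)" for j
  define \<alpha> where "\<alpha> i j = cinner_on {..<N} (u j) (\<lambda>r. of_real (a i r))" for i j
  define \<beta> where "\<beta> i j = cinner_on R (e j) (\<lambda>\<gamma>. of_real (b i \<gamma>))" for i j
  have J: "finite J" "J \<subseteq> {..<N}"
    unfolding J_def by auto
  have e_on: "orthonormal_on R J e"
    unfolding e_def using sv by (intro orthonormal_on_normalize_orthogonal) (auto simp: J_def)
  have "sqrt (\<mu> j) \<le> (\<Sum>i<m. p i * (cmod (\<alpha> i j) * cmod (\<beta> i j)))" if "j \<in> J" for j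
  proof -
    have "of_real (sqrt (\<mu> j)) = cinner_on R (e j) (transpose_app N X (u j))"
      using sv[of j j] that unfolding e_def cinner_on_mult_left J_def
      by (simp add: real_div_sqrt flip: of_real_mult of_real_divide)
    also have "\<dots> = cinner_on R (e j) (\<lambda>\<gamma>. \<Sum>i\<in>{..<m}. (of_real (p i) * cnj (\<alpha> i j)) * of_real (b i \<gamma>))"
      unfolding \<alpha>_def by (intro cinner_on_cong refl transpose_app_convex_rank_one[OF X]) auto
    also have "\<dots> = (\<Sum>i<m. of_real (p i) * cnj (\<alpha> i j) * \<beta> i j)"
      unfolding cinner_on_sum_right \<beta>_def ..
    finally have "sqrt (\<mu> j) = cmod (\<Sum>i<m. of_real (p i) * cnj (\<alpha> i j) * \<beta> i j)"
      by (metis norm_of_real real_sqrt_ge_zero abs_of_nonneg \<mu> J_def mem_Collect_eq that)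
    also have "\<dots> \<le> (\<Sum>i<m. p i * (cmod (\<alpha> i j) * cmod (\<beta> i j)))"
      using p(1) by (auto simp: norm_mult intro!: order_trans[OF norm_sum] sum_mono)
    finally show ?thesis .
  qed
  then have "(\<Sum>j\<in>J. sqrt (\<mu> j)) \<le> (\<Sum>i<m. p i * (\<Sum>j\<in>J. cmod (\<alpha> i j) * cmod (\<beta> i j)))"
    by (subst sum_distrib_left, subst sum.swap) (rule sum_mono)
  also have "\<dots> \<le> (\<Sum>i<m. p i * C)"
  proof (intro sum_mono mult_left_mono)
    fix i assume "i \<in> {..<m}"
    then show "(\<Sum>j\<in>J. cmod (\<alpha> i j) * cmod (\<beta> i j)) \<le> C"
      using sum_coeff_products_le[OF J(1) orthonormal_on_subset[OF on J(2)] e_on,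
          of "\<lambda>r. of_real (a i r)" "\<lambda>\<gamma>. of_real (b i \<gamma>)"] C[of i]
      unfolding \<alpha>_def \<beta>_def cinner_on_of_real_self by simp
  qed (use p in auto)
  also have "\<dots> = C"
    using p(2) by (simp flip: sum_distrib_right)
  also have "(\<Sum>j\<in>J. sqrt (\<mu> j)) = (\<Sum>j<N. sqrt (\<mu> j))"
    using J \<mu> unfolding J_def by (intro sum.mono_neutral_left) (auto simp: order_less_le)
  finally show ?thesis .
qed

lemma gram_mat_moment_inequality:
  fixes X :: "nat \<Rightarrow> 'b \<Rightarrow> real"
  assumes "\<And>r \<gamma>. r < N \<Longrightarrow> \<gamma> \<in> R \<Longrightarrow> X r \<gamma> = (\<Sum>i<m. p i * a i r * b i \<gamma>)"
    and "\<And>i. i < m \<Longrightarrow> p i \<ge> 0" "(\<Sum>i<m. p i) = 1"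
    and "\<And>i. i < m \<Longrightarrow> sqrt (\<Sum>r<N. (a i r)\<^sup>2) * sqrt (\<Sum>\<gamma>\<in>R. (b i \<gamma>)\<^sup>2) \<le> C"
  shows "(trace_pow_half (gram_mat N R X) 2)\<^sup>2 \<le> trace_pow_half (gram_mat N R X) 3 * C"
proof -
  obtain u \<mu> where on: "orthonormal_on {..<N} {..<N} u" and \<mu>: "\<And>j. j < N \<Longrightarrow> \<mu> j \<ge> 0"
    and sv: "\<And>i j. i < N \<Longrightarrow> j < N \<Longrightarrow> cinner_on R (transpose_app N X (u i)) (transpose_app N X (u j))
        = (if i = j then of_real (\<mu> j) else 0)"
    and cp: "char_poly (gram_mat N R X) = (\<Prod>j\<leftarrow>[0..<N]. [:- \<mu> j, 1:])"
    using gram_mat_singular_system[of N R X] by metis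
  have "(trace_pow_half (gram_mat N R X) 2)\<^sup>2 = (\<Sum>j<N. \<mu> j)\<^sup>2"
    unfolding trace_pow_half_eigenvalues[OF cp] using \<mu> by simp
  also have "\<dots> \<le> (\<Sum>j<N. \<mu> j powr (3 / 2)) * (\<Sum>j<N. sqrt (\<mu> j))"
    using \<mu> by (intro sum_square_le_powr_three_halves) auto
  also have "\<dots> \<le> (\<Sum>j<N. \<mu> j powr (3 / 2)) * C"
    using sum_sqrt_singular_values_le[OF on \<mu> sv assms] by (intro mult_left_mono sum_nonneg) auto
  also have "\<dots> = trace_pow_half (gram_mat N R X) 3 * C"
    unfolding trace_pow_half_eigenvalues[OF cp] by simp
  finally show ?thesis .
qed

section \<open>Unfoldings of convex combinations of product tensors\<close>

definition index_lists :: "nat \<Rightarrow> (nat \<Rightarrow> 'a set) \<Rightarrow> 'a list set" where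
  "index_lists n A = {xs. length xs = n \<and> (\<forall>k<n. xs ! k \<in> A k)}"

lemma index_lists_0: "index_lists 0 A = {[]}"
  unfolding index_lists_def by auto

lemma index_lists_Suc: "index_lists (Suc n) A = (\<lambda>(xs, a). xs @ [a]) ` (index_lists n A \<times> A n)"
proof
  show "index_lists (Suc n) A \<subseteq> (\<lambda>(xs, a). xs @ [a]) ` (index_lists n A \<times> A n)"
  proof
    fix xs assume xs: "xs \<in> index_lists (Suc n) A"
    then have "xs \<noteq> []"
      unfolding index_lists_def by auto
    then have "xs = butlast xs @ [last xs]"
      by simp
    moreover have "butlast xs \<in> index_lists n A" "last xs \<in> A n"
      using xs \<open>xs \<noteq> []\<close> unfolding index_lists_def by (auto simp: nth_butlast last_conv_nth)
    ultimately show "xs \<in> (\<lambda>(xs, a). xs @ [a]) ` (index_lists n A \<times> A n)"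
      by (metis (no_types, lifting) SigmaI case_prod_conv image_eqI)
  qed
qed (auto simp: index_lists_def nth_append less_Suc_eq)

lemma sum_index_lists_prod:
  "(\<Sum>xs\<in>index_lists n A. \<Prod>k<n. f k (xs ! k)) = (\<Prod>k<n. \<Sum>a\<in>A k. (f k a :: 'b :: comm_semiring_1))"
proof (induction n)
  case 0
  then show ?case
    by (simp add: index_lists_0)
next
  case (Suc n)
  have inj: "inj_on (\<lambda>(xs, a). xs @ [a]) (index_lists n A \<times> A n)"
    by (rule inj_onI) auto
  have "(\<Sum>xs\<in>index_lists (Suc n) A. \<Prod>k<Suc n. f k (xs ! k))
      = (\<Sum>(xs, a)\<in>index_lists n A \<times> A n. (\<Prod>k<n. f k (xs ! k)) * f n a)"
    unfolding index_lists_Suc sum.reindex[OF inj]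
    by (intro sum.cong refl) (auto simp: index_lists_def nth_append intro!: prod.cong)
  also have "\<dots> = (\<Sum>xs\<in>index_lists n A. \<Prod>k<n. f k (xs ! k)) * (\<Sum>a\<in>A n. f n a)"
    by (simp add: sum.cartesian_product[symmetric] sum_product)
  finally show ?case
    using Suc by simp
qed

lemma prod_lessThan_split:
  fixes k0 n :: nat
  assumes "k0 < n"
  shows "(\<Prod>k<n. g k) = g k0 * (\<Prod>k<n. if k = k0 then 1 else g k)"
proof -
  have "(\<Prod>k<n. if k = k0 then 1 else g k) = (\<Prod>k\<in>{..<n} - {k0}. if k = k0 then 1 else g k)"
    by (intro prod.mono_neutral_right) auto
  also have "\<dots> = (\<Prod>k\<in>{..<n} - {k0}. g k)"
    by (intro prod.cong) auto
  finally show ?thesis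
    using prod.remove[of "{..<n}" k0 g] assms by simp
qed

lemma sqrt_sum_sq_index_lists_prod_le:
  assumes "\<And>k. k < n \<Longrightarrow> (\<Sum>x\<in>A k. (f k x)\<^sup>2) \<le> (c k)\<^sup>2" and "\<And>k. k < n \<Longrightarrow> c k \<ge> 0"
  shows "sqrt (\<Sum>\<gamma>\<in>index_lists n A. (\<Prod>k<n. f k (\<gamma> ! k))\<^sup>2) \<le> (\<Prod>k<n. c k :: real)"
proof -
  have "(\<Sum>\<gamma>\<in>index_lists n A. (\<Prod>k<n. f k (\<gamma> ! k))\<^sup>2) = (\<Prod>k<n. \<Sum>x\<in>A k. (f k x)\<^sup>2)"
    unfolding prod_power_distrib by (rule sum_index_lists_prod)
  also have "\<dots> \<le> (\<Prod>k<n. c k)\<^sup>2"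
    unfolding prod_power_distrib using assms(1) by (intro prod_mono) (auto intro: sum_nonneg)
  finally show ?thesis
    using assms(2) prod_nonneg[of "{..<n}" c] real_sqrt_le_mono by fastforce
qed

(* Row r of the k0-th unfolding carries the index value lo + r; the column multi-indices have a
   dummy entry 0 in position k0. *)
lemma unfold_gram_eq_gram_mat:
  assumes "k0 < n"
  shows "unfold_gram n d lo X k0
    = gram_mat (d k0 ^ 2 - lo) (index_lists n ((\<lambda>k. {lo..<d k ^ 2})(k0 := {0}))) (\<lambda>r \<gamma>. X (\<gamma>[k0 := lo + r]))"
proof -
  have "{\<gamma>. length \<gamma> = n \<and> \<gamma> ! k0 = 0
        \<and> (\<forall>j<n. j \<noteq> k0 \<longrightarrow> lo \<le> \<gamma> ! j \<and> \<gamma> ! j < (d j)\<^sup>2)}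
      = index_lists n ((\<lambda>k. {lo..<d k ^ 2})(k0 := {0}))"
    unfolding index_lists_def using assms by auto
  then show ?thesis
    unfolding unfold_gram_def gram_mat_def Let_def by simp
qed

lemma unfold_gram_moment_inequality:
  fixes f :: "nat \<Rightarrow> nat \<Rightarrow> nat \<Rightarrow> real"
  assumes k0: "k0 < n"
    and X: "\<And>\<gamma>. length \<gamma> = n \<Longrightarrow> (\<forall>j<n. lo \<le> \<gamma> ! j \<and> \<gamma> ! j < d j ^ 2)
      \<Longrightarrow> X \<gamma> = (\<Sum>i<m. p i * (\<Prod>k<n. f i k (\<gamma> ! k)))"
    and p: "\<And>i. i < m \<Longrightarrow> p i \<ge> 0" "(\<Sum>i<m. p i) = 1"
    and f: "\<And>i k. i < m \<Longrightarrow> k < n \<Longrightarrow> (\<Sum>a\<in>{lo..<d k ^ 2}. (f i k a)\<^sup>2) \<le> (c k)\<^sup>2"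
    and c: "\<And>k. k < n \<Longrightarrow> c k \<ge> 0"
  shows "(trace_pow_half (unfold_gram n d lo X k0) 2)\<^sup>2
    \<le> trace_pow_half (unfold_gram n d lo X k0) 3 * (\<Prod>k<n. c k)"
proof -
  define A where "A = (\<lambda>k. {lo..<d k ^ 2})(k0 := {0})"
  define a where "a i r = f i k0 (lo + r)" for i r
  define b where "b i \<gamma> = (\<Prod>k<n. if k = k0 then 1 else f i k (\<gamma> ! k))" for i \<gamma>
  show ?thesis
    unfolding unfold_gram_eq_gram_mat[OF k0] A_def[symmetric]
  proof (rule gram_mat_moment_inequality[OF _ p])
    fix r \<gamma> assume r: "r < d k0 ^ 2 - lo" and \<gamma>: "\<gamma> \<in> index_lists n A"
    then have nth: "\<gamma>[k0 := lo + r] ! k = (if k = k0 then lo + r else \<gamma> ! k)" if "k < n" for k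
      using that unfolding index_lists_def by auto
    have "X (\<gamma>[k0 := lo + r]) = (\<Sum>i<m. p i * (\<Prod>k<n. f i k (\<gamma>[k0 := lo + r] ! k)))"
      using \<gamma> r k0 nth unfolding index_lists_def A_def by (intro X) auto
    also have "\<dots> = (\<Sum>i<m. p i * a i r * b i \<gamma>)"
    proof (intro sum.cong refl)
      fix i
      have "(\<Prod>k<n. f i k (\<gamma>[k0 := lo + r] ! k)) = a i r * b i \<gamma>"
        unfolding a_def b_def using k0 nth by (subst prod_lessThan_split[OF k0]) (simp cong: if_cong)
      then show "p i * (\<Prod>k<n. f i k (\<gamma>[k0 := lo + r] ! k)) = p i * a i r * b i \<gamma>"
        by simp
    qed
    finally show "X (\<gamma>[k0 := lo + r]) = (\<Sum>i<m. p i * a i r * b i \<gamma>)" .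
  next
    fix i assume i: "i < m"
    have "(\<Sum>r<d k0 ^ 2 - lo. (a i r)\<^sup>2) = (\<Sum>x\<in>{lo..<d k0 ^ 2}. (f i k0 x)\<^sup>2)"
      unfolding a_def by (rule sum.reindex_bij_witness[of _ "\<lambda>x. x - lo" "\<lambda>r. lo + r"]) auto
    then have sa: "sqrt (\<Sum>r<d k0 ^ 2 - lo. (a i r)\<^sup>2) \<le> c k0"
      using f[OF i k0] c[OF k0] real_sqrt_le_mono[of _ "(c k0)\<^sup>2"] by simp
    have "sqrt (\<Sum>\<gamma>\<in>index_lists n A. (b i \<gamma>)\<^sup>2) \<le> (\<Prod>k<n. if k = k0 then 1 else c k)"
      unfolding b_def A_def using f[OF i] c
      by (intro sqrt_sum_sq_index_lists_prod_le[where f = "\<lambda>k x. if k = k0 then 1 else f i k x"]) auto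
    with sa show "sqrt (\<Sum>r<d k0 ^ 2 - lo. (a i r)\<^sup>2) * sqrt (\<Sum>\<gamma>\<in>index_lists n A. (b i \<gamma>)\<^sup>2)
        \<le> (\<Prod>k<n. c k)"
      unfolding prod_lessThan_split[OF k0, of c] using c k0 by (intro mult_mono) (auto intro: sum_nonneg)
  qed
qed

lemma tensor_moment_inequality:
  fixes f :: "nat \<Rightarrow> nat \<Rightarrow> nat \<Rightarrow> real"
  assumes n: "0 < n"
    and X: "\<And>\<gamma>. length \<gamma> = n \<Longrightarrow> (\<forall>j<n. lo \<le> \<gamma> ! j \<and> \<gamma> ! j < d j ^ 2)
      \<Longrightarrow> X \<gamma> = (\<Sum>i<m. p i * (\<Prod>k<n. f i k (\<gamma> ! k)))"
    and p: "\<And>i. i < m \<Longrightarrow> p i \<ge> 0" "(\<Sum>i<m. p i) = 1"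
    and f: "\<And>i k. i < m \<Longrightarrow> k < n \<Longrightarrow> (\<Sum>a\<in>{lo..<d k ^ 2}. (f i k a)\<^sup>2) \<le> (c k)\<^sup>2"
    and c: "\<And>k. k < n \<Longrightarrow> c k \<ge> 0"
  shows "(tensor_moment n d lo X 2)\<^sup>2 \<le> tensor_moment n d lo X 3 * (\<Prod>k<n. c k)"
proof -
  define g where "g q k = trace_pow_half (unfold_gram n d lo X k) q" for q k
  obtain k where k: "k < n" "tensor_moment n d lo X 2 = g 2 k"
    using Max_in[of "g 2 ` {..<n}"] n unfolding tensor_moment_def g_def by fastforce
  have "(g 2 k)\<^sup>2 \<le> g 3 k * (\<Prod>k<n. c k)"
    unfolding g_def by (rule unfold_gram_moment_inequality[OF k(1) X p f c])
  also have "\<dots> \<le> tensor_moment n d lo X 3 * (\<Prod>k<n. c k)"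
    using k(1) c unfolding tensor_moment_def g_def by (intro mult_right_mono Max_ge prod_nonneg) auto
  finally show ?thesis
    unfolding k(2) .
qed

section \<open>Density operators and Bloch vectors\<close>

lemma op_trace_mult_commute: "op_trace D (op_mult D A B) = op_trace D (op_mult D B A)"
  unfolding op_trace_def op_mult_def by (subst sum.swap) (simp add: mult.commute)

lemma cnj_eq_imp_of_real_Re:
  assumes "cnj z = z"
  shows "z = of_real (Re z)"
proof -
  have "Im z = 0"
    using arg_cong[OF assms, of Im] by simp
  then show ?thesis
    by (simp add: complex_eq_iff)
qed

lemma op_trace_mult_hermitian_real:
  assumes "hermitian_op D A" "hermitian_op D B"
  shows "op_trace D (op_mult D A B) = of_real (Re (op_trace D (op_mult D A B)))"
proof -
  have "cnj (op_trace D (op_mult D A B)) = (\<Sum>i<D. \<Sum>l<D. B i l * A l i)"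
    unfolding op_trace_def op_mult_def cnj_sum
  proof (intro sum.cong refl)
    fix i l assume "i \<in> {..<D}" "l \<in> {..<D}"
    then have "A l i = cnj (A i l)" "B i l = cnj (B l i)"
      using assms unfolding hermitian_op_def by blast+
    then show "cnj (A i l * B l i) = B i l * A l i"
      by simp
  qed
  also have "\<dots> = op_trace D (op_mult D A B)"
    using op_trace_mult_commute[of D B A] by (simp add: op_trace_def op_mult_def)
  finally show ?thesis
    by (rule cnj_eq_imp_of_real_Re)
qed

lemma gen_ext_hermitian:
  assumes "su_generators d (L d)" "a < d\<^sup>2"
  shows "hermitian_op d (gen_ext L d a)"
proof (cases "a = 0")
  case True
  then show ?thesis
    unfolding gen_ext_def hermitian_op_def by simp
next
  case False
  then show ?thesis
    using assms unfolding su_generators_def gen_ext_def by simp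
qed

lemma op_mult_gen_ext_0_left: "i < d \<Longrightarrow> op_mult d (gen_ext L d 0) B i j = B i j"
  unfolding op_mult_def gen_ext_def by (simp add: if_distrib[of "\<lambda>c. c * _"] cong: if_cong)

lemma op_mult_gen_ext_0_right: "j < d \<Longrightarrow> op_mult d A (gen_ext L d 0) i j = A i j"
  unfolding op_mult_def gen_ext_def by (simp add: if_distrib[of "\<lambda>c. _ * c"] cong: if_cong)

lemma op_trace_mult_gen_ext:
  assumes su: "su_generators d (L d)" and "a < d\<^sup>2" "b < d\<^sup>2"
  shows "op_trace d (op_mult d (gen_ext L d a) (gen_ext L d b))
    = (if a = b then (if a = 0 then of_nat d else 2) else 0)"
proof -
  have traceless: "op_trace d (L d c) = 0" if "c \<in> {1..<d\<^sup>2}" for c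
    using su that unfolding su_generators_def by blast
  consider "a = 0" "b = 0" | "a = 0" "b \<noteq> 0" | "a \<noteq> 0" "b = 0" | "a \<noteq> 0" "b \<noteq> 0"
    by blast
  then show ?thesis
  proof cases
    case 1
    then show ?thesis
      by (simp add: op_trace_def op_mult_gen_ext_0_left) (simp add: gen_ext_def)
  next
    case 2
    then show ?thesis
      using traceless[of b] assms by (simp add: op_trace_def op_mult_gen_ext_0_left) (simp add: gen_ext_def)
  next
    case 3
    then show ?thesis
      using traceless[of a] assms by (simp add: op_trace_def op_mult_gen_ext_0_right) (simp add: gen_ext_def)
  next
    case 4
    then show ?thesis
      using su assms unfolding su_generators_def gen_ext_def by auto
  qed
qed

lemma quadratic_nonneg_discriminant:
  fixes a b c :: real
  assumes "0 \<le> a" "\<And>t. 0 \<le> a * t\<^sup>2 - 2 * b * t + c"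
  shows "b\<^sup>2 \<le> a * c"
proof (cases "a = 0")
  case True
  have "b = 0"
  proof (rule ccontr)
    assume "b \<noteq> 0"
    then show False
      using assms(2)[of "(c + 1) / (2 * b)"] True by (simp add: field_simps)
  qed
  then show ?thesis
    using True by simp
next
  case False
  then have "0 \<le> (a * c - b\<^sup>2) / a"
    using assms(2)[of "b / a"] by (simp add: field_simps power2_eq_square)
  then show ?thesis
    using False assms(1) by (simp add: zero_le_divide_iff)
qed

lemma sum_two_points:
  fixes g :: "nat \<Rightarrow> 'a::comm_monoid_add"
  assumes "x < D" "y < D" "x \<noteq> y" "\<And>i. i \<noteq> x \<Longrightarrow> i \<noteq> y \<Longrightarrow> g i = 0"
  shows "(\<Sum>i<D. g i) = g x + g y"
proof -
  have "(\<Sum>i<D. g i) = (\<Sum>i\<in>{x, y}. g i)"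
    using assms by (intro sum.mono_neutral_right) auto
  then show ?thesis
    using assms by simp
qed

lemma density_op_quadratic_form:
  "density_op D s \<Longrightarrow> 0 \<le> Re (\<Sum>i<D. \<Sum>j<D. cnj (v i) * s i j * v j)"
  unfolding density_op_def Let_def by blast

lemma density_op_diag:
  assumes dens: "density_op D s" and x: "x < D"
  shows "s x x = of_real (Re (s x x))" "Re (s x x) \<ge> 0"
proof -
  have "s x x = cnj (s x x)"
    using dens x unfolding density_op_def hermitian_op_def by blast
  then show "s x x = of_real (Re (s x x))"
    by (intro cnj_eq_imp_of_real_Re) simp
  define v where "v i = (if i = x then 1 else 0 :: complex)" for i
  have "(\<Sum>i<D. \<Sum>j<D. cnj (v i) * s i j * v j) = s x x"
    unfolding v_def using x
    by (simp add: if_distrib[of cnj] if_distrib[of "\<lambda>c. c * _"] if_distrib[of "\<lambda>c. _ * c"] cong: if_cong)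
  then show "Re (s x x) \<ge> 0"
    using density_op_quadratic_form[OF dens, of v] by simp
qed

lemma density_op_two_point_form:
  assumes dens: "density_op D s" and xy: "x < D" "y < D" "x \<noteq> y"
  shows "0 \<le> Re (cnj a * s x x * a + cnj a * s x y * b + cnj b * s y x * a + cnj b * s y y * b)"
proof -
  define v where "v i = (if i = x then a else if i = y then b else 0)" for i
  have "(\<Sum>i<D. \<Sum>j<D. cnj (v i) * s i j * v j)
      = cnj a * s x x * a + cnj a * s x y * b + (cnj b * s y x * a + cnj b * s y y * b)"
    using xy by (simp add: sum_two_points[OF xy] v_def)
  then show ?thesis
    using density_op_quadratic_form[OF dens, of v] by (simp add: add.assoc)
qed

lemma density_op_offdiag_le:
  assumes dens: "density_op D s" and xy: "x < D" "y < D"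
  shows "(cmod (s x y))\<^sup>2 \<le> Re (s x x) * Re (s y y)"
proof (cases "x = y")
  case True
  have "cmod (s x x) = \<bar>Re (s x x)\<bar>"
    using density_op_diag(1)[OF dens xy(1)] by (metis norm_of_real)
  then show ?thesis
    using True by (simp add: power2_eq_square)
next
  case False
  define z where "z = s x y"
  define sx where "sx = Re (s x x)"
  define sy where "sy = Re (s y y)"
  have sxx: "s x x = of_real sx" and syy: "s y y = of_real sy" and "sx \<ge> 0" "sy \<ge> 0"
    using density_op_diag[OF dens xy(1)] density_op_diag[OF dens xy(2)] unfolding sx_def sy_def by auto
  have syx: "s y x = cnj z"
    using dens xy unfolding density_op_def hermitian_op_def z_def by blast
  have "0 \<le> sx * t\<^sup>2 - 2 * (cmod z)\<^sup>2 * t + sy * (cmod z)\<^sup>2" for t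
    using density_op_two_point_form[OF dens xy False, of "of_real t" "- cnj z"] cmod_power2[of z]
    unfolding sxx syy syx z_def[symmetric] by (simp add: power2_eq_square algebra_simps)
  then have "((cmod z)\<^sup>2)\<^sup>2 \<le> sx * (sy * (cmod z)\<^sup>2)"
    using \<open>sx \<ge> 0\<close> by (intro quadratic_nonneg_discriminant) (simp add: algebra_simps)
  then have le: "(cmod z)\<^sup>2 * (cmod z)\<^sup>2 \<le> (sx * sy) * (cmod z)\<^sup>2"
    by (simp add: power2_eq_square algebra_simps)
  show ?thesis
  proof (cases "z = 0")
    case True
    then show ?thesis
      using \<open>sx \<ge> 0\<close> \<open>sy \<ge> 0\<close> unfolding z_def sx_def sy_def by simp
  next
    case False
    then show ?thesis
      using mult_right_le_imp_le[OF le] unfolding z_def sx_def sy_def by simp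
  qed
qed

lemma density_op_purity:
  assumes "density_op D s"
  shows "(\<Sum>x<D. \<Sum>y<D. (cmod (s x y))\<^sup>2) \<le> 1"
proof -
  have "(\<Sum>x<D. \<Sum>y<D. (cmod (s x y))\<^sup>2) \<le> (\<Sum>x<D. \<Sum>y<D. Re (s x x) * Re (s y y))"
    using density_op_offdiag_le[OF assms] by (intro sum_mono) auto
  also have "\<dots> = (\<Sum>x<D. Re (s x x)) * (\<Sum>y<D. Re (s y y))"
    by (rule sum_product[symmetric])
  also have "(\<Sum>x<D. Re (s x x)) = 1"
    using assms unfolding density_op_def op_trace_def by (simp flip: Re_sum)
  finally show ?thesis
    by simp
qed

definition op_vec :: "(nat \<Rightarrow> nat \<Rightarrow> complex) \<Rightarrow> nat \<times> nat \<Rightarrow> complex" where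
  "op_vec A = (\<lambda>(x, y). A x y)"

lemma cinner_on_op_vec:
  assumes "hermitian_op d A"
  shows "cinner_on ({..<d} \<times> {..<d}) (op_vec A) (op_vec B) = op_trace d (op_mult d A B)"
proof -
  have "cinner_on ({..<d} \<times> {..<d}) (op_vec A) (op_vec B) = (\<Sum>x<d. \<Sum>y<d. A y x * B x y)"
    unfolding cinner_on_def op_vec_def sum.cartesian_product'
  proof (intro sum.cong refl)
    fix x y assume "x \<in> {..<d}" "y \<in> {..<d}"
    then have "A y x = cnj (A x y)"
      using assms unfolding hermitian_op_def by blast
    then show "cnj (case (x, y) of (x, y) \<Rightarrow> A x y) * (case (x, y) of (x, y) \<Rightarrow> B x y) = A y x * B x y"
      by simp
  qed
  also have "\<dots> = op_trace d (op_mult d A B)"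
    unfolding op_trace_def op_mult_def by (subst sum.swap) simp
  finally show ?thesis .
qed

definition hilbert_schmidt_basis ::
    "(nat \<Rightarrow> nat \<Rightarrow> nat \<Rightarrow> nat \<Rightarrow> complex) \<Rightarrow> nat \<Rightarrow> nat \<Rightarrow> nat \<times> nat \<Rightarrow> complex" where
  "hilbert_schmidt_basis L d a =
     (\<lambda>z. of_real (1 / sqrt (if a = 0 then real d else 2)) * op_vec (gen_ext L d a) z)"

lemma hilbert_schmidt_basis_orthonormal:
  assumes su: "su_generators d (L d)" and d: "0 < d"
  shows "orthonormal_on ({..<d} \<times> {..<d}) {..<d\<^sup>2} (hilbert_schmidt_basis L d)"
  unfolding orthonormal_on_def
proof (intro ballI)
  fix a b assume "a \<in> {..<d\<^sup>2}" "b \<in> {..<d\<^sup>2}"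
  then have ab: "a < d\<^sup>2" "b < d\<^sup>2"
    by auto
  define w :: "nat \<Rightarrow> real" where "w a = (if a = 0 then real d else 2)" for a
  have "w a > 0"
    using d by (simp add: w_def)
  have "cinner_on ({..<d} \<times> {..<d}) (hilbert_schmidt_basis L d a) (hilbert_schmidt_basis L d b)
      = of_real (1 / sqrt (w a) * (1 / sqrt (w b))) * (if a = b then of_real (w a) else 0)"
    unfolding hilbert_schmidt_basis_def cinner_on_mult_left cinner_on_mult_right
      cinner_on_op_vec[OF gen_ext_hermitian[of d L, OF su ab(1)]] op_trace_mult_gen_ext[of d L, OF su ab] w_def
    by simp
  also have "\<dots> = (if a = b then 1 else 0)"
  proof -
    have "1 / sqrt (w a) * (1 / sqrt (w a)) * w a = 1"
      using \<open>w a > 0\<close> by (simp add: field_simps)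
    then have "of_real (1 / sqrt (w a) * (1 / sqrt (w a))) * of_real (w a) = (1 :: complex)"
      by (metis of_real_1 of_real_mult)
    then show ?thesis
      by (cases "a = b") simp_all
  qed
  finally show "cinner_on ({..<d} \<times> {..<d}) (hilbert_schmidt_basis L d a) (hilbert_schmidt_basis L d b)
      = (if a = b then 1 else 0)" .
qed

lemma density_bloch_bound:
  assumes su: "su_generators d (L d)" and dens: "density_op d \<sigma>" and d: "0 < d"
  shows "(\<Sum>a\<in>{1..<d\<^sup>2}. (cmod (op_trace d (op_mult d \<sigma> (L d a))))\<^sup>2) \<le> 2 * (1 - 1 / real d)"
proof -
  define I where "I = {..<d} \<times> {..<d}"
  define c where "c a = cinner_on I (hilbert_schmidt_basis L d a) (op_vec \<sigma>)" for a
  have c: "c a = of_real (1 / sqrt (if a = 0 then real d else 2)) * op_trace d (op_mult d \<sigma> (gen_ext L d a))"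
    if "a < d\<^sup>2" for a
    unfolding c_def I_def hilbert_schmidt_basis_def cinner_on_mult_left
      cinner_on_op_vec[OF gen_ext_hermitian[of d L, OF su that]] op_trace_mult_commute[of d "gen_ext L d a"]
    by simp
  have "op_trace d (op_mult d \<sigma> (gen_ext L d 0)) = 1"
    using dens unfolding density_op_def op_trace_def by (simp add: op_mult_gen_ext_0_right)
  then have c0: "(cmod (c 0))\<^sup>2 = 1 / real d"
    using d c[of 0] by (simp add: norm_divide power_divide)
  have "(\<Sum>a<d\<^sup>2. (cmod (c a))\<^sup>2) \<le> Re (cinner_on I (op_vec \<sigma>) (op_vec \<sigma>))"
    unfolding c_def I_def by (rule bessel_inequality[OF _ hilbert_schmidt_basis_orthonormal[of d L, OF su d]]) simp
  also have "\<dots> = (\<Sum>x<d. \<Sum>y<d. (cmod (\<sigma> x y))\<^sup>2)"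
    unfolding cinner_on_self I_def op_vec_def sum.cartesian_product' by simp
  also have "\<dots> \<le> 1"
    by (rule density_op_purity[OF dens])
  finally have bessel: "(\<Sum>a<d\<^sup>2. (cmod (c a))\<^sup>2) \<le> 1" .
  have "{..<d\<^sup>2} = insert 0 {1..<d\<^sup>2}"
    using d by auto
  then have "(\<Sum>a<d\<^sup>2. (cmod (c a))\<^sup>2) = 1 / real d + (\<Sum>a\<in>{1..<d\<^sup>2}. (cmod (c a))\<^sup>2)"
    using c0 by simp
  also have "(\<Sum>a\<in>{1..<d\<^sup>2}. (cmod (c a))\<^sup>2)
      = (\<Sum>a\<in>{1..<d\<^sup>2}. (cmod (op_trace d (op_mult d \<sigma> (L d a))))\<^sup>2) / 2"
    unfolding sum_divide_distrib using c by (intro sum.cong refl) (auto simp: norm_divide power_divide gen_ext_def)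
  finally show ?thesis
    using bessel by simp
qed

section \<open>Separable states\<close>

lemma basis_idx_eq_index_lists: "basis_idx n d = index_lists n (\<lambda>k. {..<d k})"
  unfolding basis_idx_def index_lists_def by auto

lemma corr_trace_separable:
  assumes "\<forall>x\<in>basis_idx n d. \<forall>y\<in>basis_idx n d.
      \<rho> x y = (\<Sum>i<m. complex_of_real (p i) * (\<Prod>k<n. \<sigma> i k (x ! k) (y ! k)))"
  shows "corr_trace n d L \<rho> \<alpha>
    = (\<Sum>i<m. of_real (p i) * (\<Prod>k<n. op_trace (d k) (op_mult (d k) (\<sigma> i k) (gen_ext L (d k) (\<alpha> ! k)))))"
proof -
  define g where "g k = gen_ext L (d k) (\<alpha> ! k)" for k
  define B where "B = basis_idx n d"
  have "corr_trace n d L \<rho> \<alpha>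
      = (\<Sum>x\<in>B. \<Sum>y\<in>B. \<Sum>i<m. of_real (p i) * (\<Prod>k<n. \<sigma> i k (x ! k) (y ! k) * g k (y ! k) (x ! k)))"
    unfolding corr_trace_def B_def g_def using assms
    by (intro sum.cong refl) (simp add: sum_distrib_right prod.distrib mult.assoc)
  also have "\<dots> = (\<Sum>x\<in>B. \<Sum>i<m. \<Sum>y\<in>B. of_real (p i) * (\<Prod>k<n. \<sigma> i k (x ! k) (y ! k) * g k (y ! k) (x ! k)))"
    by (intro sum.cong refl) (rule sum.swap)
  also have "\<dots> = (\<Sum>i<m. of_real (p i) * (\<Sum>x\<in>B. \<Sum>y\<in>B. \<Prod>k<n. \<sigma> i k (x ! k) (y ! k) * g k (y ! k) (x ! k)))"
    by (subst sum.swap) (simp add: sum_distrib_left)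
  also have "\<dots> = (\<Sum>i<m. of_real (p i) * (\<Prod>k<n. op_trace (d k) (op_mult (d k) (\<sigma> i k) (g k))))"
  proof (intro sum.cong refl arg_cong[of _ _ "\<lambda>z. of_real (p _) * z"])
    fix i
    have "(\<Sum>x\<in>B. \<Sum>y\<in>B. \<Prod>k<n. \<sigma> i k (x ! k) (y ! k) * g k (y ! k) (x ! k))
        = (\<Sum>x\<in>B. \<Prod>k<n. \<Sum>b<d k. \<sigma> i k (x ! k) b * g k b (x ! k))"
      unfolding B_def basis_idx_eq_index_lists
      by (intro sum.cong refl) (rule sum_index_lists_prod[where f = "\<lambda>k b. \<sigma> i k (_ ! k) b * g k b (_ ! k)"])
    also have "\<dots> = (\<Prod>k<n. \<Sum>a<d k. \<Sum>b<d k. \<sigma> i k a b * g k b a)"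
      unfolding B_def basis_idx_eq_index_lists by (rule sum_index_lists_prod)
    finally show "(\<Sum>x\<in>B. \<Sum>y\<in>B. \<Prod>k<n. \<sigma> i k (x ! k) (y ! k) * g k (y ! k) (x ! k))
        = (\<Prod>k<n. op_trace (d k) (op_mult (d k) (\<sigma> i k) (g k)))"
      by (simp add: op_trace_def op_mult_def)
  qed
  finally show ?thesis
    unfolding g_def .
qed

(* t i k is the Bloch vector a \<mapsto> Tr(\<sigma>_ik \<lambda>_a) of the k-th factor of the i-th product state. *)
lemma separable_bloch_decomposition:
  assumes d: "\<forall>k<n. 0 < d k" and su: "\<forall>k<n. su_generators (d k) (L (d k))"
    and sep: "fully_separable n d \<rho>"
  obtains m :: nat and p :: "nat \<Rightarrow> real" and t :: "nat \<Rightarrow> nat \<Rightarrow> nat \<Rightarrow> real"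
  where "\<And>i. i < m \<Longrightarrow> p i \<ge> 0" "(\<Sum>i<m. p i) = 1"
    "\<And>\<alpha>. \<forall>k<n. \<alpha> ! k < d k ^ 2
      \<Longrightarrow> Re (corr_trace n d L \<rho> \<alpha>) = (\<Sum>i<m. p i * (\<Prod>k<n. t i k (\<alpha> ! k)))"
    "\<And>i k. i < m \<Longrightarrow> k < n \<Longrightarrow> t i k 0 = 1"
    "\<And>i k. i < m \<Longrightarrow> k < n \<Longrightarrow> (\<Sum>a\<in>{1..<d k ^ 2}. (t i k a)\<^sup>2) \<le> 2 * (1 - 1 / real (d k))"
proof -
  obtain m :: nat and p :: "nat \<Rightarrow> real" and \<sigma> :: "nat \<Rightarrow> nat \<Rightarrow> nat \<Rightarrow> nat \<Rightarrow> complex"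
    where p: "\<forall>i<m. p i \<ge> 0" "(\<Sum>i<m. p i) = 1"
    and dens: "\<forall>i<m. \<forall>k<n. density_op (d k) (\<sigma> i k)"
    and \<rho>: "\<forall>x\<in>basis_idx n d. \<forall>y\<in>basis_idx n d.
      \<rho> x y = (\<Sum>i<m. complex_of_real (p i) * (\<Prod>k<n. \<sigma> i k (x ! k) (y ! k)))"
    using sep unfolding fully_separable_def by blast
  define t where "t i k a = Re (op_trace (d k) (op_mult (d k) (\<sigma> i k) (gen_ext L (d k) a)))" for i k a
  have corr: "Re (corr_trace n d L \<rho> \<alpha>) = (\<Sum>i<m. p i * (\<Prod>k<n. t i k (\<alpha> ! k)))"
    if \<alpha>: "\<forall>k<n. \<alpha> ! k < d k ^ 2" for \<alpha>
  proof -
    have "op_trace (d k) (op_mult (d k) (\<sigma> i k) (gen_ext L (d k) (\<alpha> ! k))) = of_real (t i k (\<alpha> ! k))"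
      if "i < m" "k < n" for i k
      unfolding t_def using dens su \<alpha> that
      by (intro op_trace_mult_hermitian_real gen_ext_hermitian) (auto simp: density_op_def)
    then show ?thesis
      unfolding corr_trace_separable[OF \<rho>] by (simp add: Re_sum flip: of_real_prod)
  qed
  have t0: "t i k 0 = 1" if "i < m" "k < n" for i k
    using dens that unfolding t_def density_op_def op_trace_def by (simp add: op_mult_gen_ext_0_right)
  have bloch: "(\<Sum>a\<in>{1..<d k ^ 2}. (t i k a)\<^sup>2) \<le> 2 * (1 - 1 / real (d k))" if "i < m" "k < n" for i k
  proof -
    have "(\<Sum>a\<in>{1..<d k ^ 2}. (t i k a)\<^sup>2)
        \<le> (\<Sum>a\<in>{1..<d k ^ 2}. (cmod (op_trace (d k) (op_mult (d k) (\<sigma> i k) (L (d k) a))))\<^sup>2)"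
      unfolding t_def gen_ext_def by (intro sum_mono) (simp add: cmod_power2)
    also have "\<dots> \<le> 2 * (1 - 1 / real (d k))"
      using su dens d that by (intro density_bloch_bound) auto
    finally show ?thesis .
  qed
  show ?thesis
    by (rule that[of m p t]) (use p corr t0 bloch in auto)
qed

lemma can_corr_weight_eq_prod:
  fixes d :: "nat \<Rightarrow> nat" and \<gamma> :: "nat list"
  assumes "\<forall>k<n. 0 < d k"
  shows "(\<Prod>k\<in>{k. k < n \<and> \<gamma> ! k \<noteq> 0}. real (d k))
      / (2 ^ card {k. k < n \<and> \<gamma> ! k \<noteq> 0} * (\<Prod>k<n. real (d k)))
    = (\<Prod>k<n. if \<gamma> ! k = 0 then 1 / real (d k) else 1 / 2)"
proof -
  define S where "S = {k. k < n \<and> \<gamma> ! k \<noteq> 0}"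
  define T where "T = {k. k < n \<and> \<gamma> ! k = 0}"
  have ST: "{..<n} = S \<union> T" "S \<inter> T = {}" "finite S" "finite T"
    unfolding S_def T_def by auto
  have "(\<Prod>k<n. if \<gamma> ! k = 0 then 1 / real (d k) else 1 / 2) = (\<Prod>k\<in>T. 1 / real (d k)) * (\<Prod>k\<in>S. 1 / 2)"
    unfolding prod.If_cases[OF finite_lessThan] S_def T_def
    by (intro arg_cong2[of _ _ _ _ "(*)"] prod.cong) auto
  also have "\<dots> = 1 / (\<Prod>k\<in>T. real (d k)) * (1 / 2) ^ card S"
    by (simp add: prod_dividef)
  finally have g: "(\<Prod>k<n. if \<gamma> ! k = 0 then 1 / real (d k) else 1 / 2)
      = 1 / (\<Prod>k\<in>T. real (d k)) * (1 / 2) ^ card S" .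
  have "(\<Prod>k<n. real (d k)) = (\<Prod>k\<in>S. real (d k)) * (\<Prod>k\<in>T. real (d k))"
    unfolding ST(1) using ST(2-4) by (simp add: prod.union_disjoint)
  moreover have "(\<Prod>k\<in>S. real (d k)) \<noteq> 0"
    using assms unfolding S_def by auto
  ultimately show ?thesis
    unfolding g S_def[symmetric] by (simp add: power_one_over)
qed

lemma can_corr_tensor_eq_prod:
  assumes "\<forall>k<n. 0 < d k"
  shows "can_corr_tensor n d L \<rho> \<gamma>
    = (\<Prod>k<n. if \<gamma> ! k = 0 then 1 / real (d k) else 1 / 2) * Re (corr_trace n d L \<rho> \<gamma>)"
  unfolding can_corr_tensor_def Let_def can_corr_weight_eq_prod[OF assms] ..

lemma bloch_vector_half_norm_le:
  assumes "0 < D" "(\<Sum>a\<in>{1..<D\<^sup>2}. (t a)\<^sup>2) \<le> 2 * (1 - 1 / real D)"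
  shows "(\<Sum>a\<in>{1..<D\<^sup>2}. (t a / 2)\<^sup>2) \<le> (sqrt ((real D - 1) / (2 * real D)))\<^sup>2"
proof -
  have "real D \<ge> 1"
    using assms(1) by simp
  have "(\<Sum>a\<in>{1..<D\<^sup>2}. (t a / 2)\<^sup>2) = (\<Sum>a\<in>{1..<D\<^sup>2}. (t a)\<^sup>2) / 4"
    by (simp add: power_divide sum_divide_distrib)
  also have "\<dots> \<le> 2 * (1 - 1 / real D) / 4"
    using assms(2) by simp
  also have "\<dots> = (sqrt ((real D - 1) / (2 * real D)))\<^sup>2"
    using \<open>real D \<ge> 1\<close> by (simp add: field_simps)
  finally show ?thesis .
qed

lemma canonical_weight_nonneg: "0 \<le> ((x :: real)\<^sup>2 - x + 2) / (2 * x\<^sup>2)"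
proof -
  have "0 \<le> (x - 1 / 2)\<^sup>2 + 7 / 4"
    by simp
  also have "\<dots> = x\<^sup>2 - x + 2"
    by (simp add: power2_eq_square algebra_simps)
  finally show ?thesis
    by simp
qed

lemma bloch_vector_weighted_norm_le:
  assumes "0 < D" "t 0 = 1" "(\<Sum>a\<in>{1..<D\<^sup>2}. (t a)\<^sup>2) \<le> 2 * (1 - 1 / real D)"
  shows "(\<Sum>a\<in>{0..<D\<^sup>2}. ((if a = 0 then 1 / real D else 1 / 2) * t a)\<^sup>2)
      \<le> (sqrt ((real D ^ 2 - real D + 2) / (2 * real D ^ 2)))\<^sup>2"
proof -
  have "(\<Sum>a\<in>{0..<D\<^sup>2}. ((if a = 0 then 1 / real D else 1 / 2) * t a)\<^sup>2)
      = 1 / (real D)\<^sup>2 + (\<Sum>a\<in>{1..<D\<^sup>2}. (t a)\<^sup>2) / 4"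
    using assms(1,2) by (simp add: sum.atLeast_Suc_lessThan power_divide sum_divide_distrib)
  also have "\<dots> \<le> 1 / (real D)\<^sup>2 + 2 * (1 - 1 / real D) / 4"
    using assms(3) by simp
  also have "\<dots> = (sqrt ((real D ^ 2 - real D + 2) / (2 * real D ^ 2)))\<^sup>2"
    unfolding real_sqrt_pow2[OF canonical_weight_nonneg] using assms(1)
    by (simp add: field_simps power2_eq_square)
  finally show ?thesis .
qed

lemma corr_tensor_moment_bound:
  fixes m :: nat and p :: "nat \<Rightarrow> real" and t :: "nat \<Rightarrow> nat \<Rightarrow> nat \<Rightarrow> real"
  assumes n: "0 < n" and d: "\<forall>k<n. 0 < d k"
    and p: "\<And>i. i < m \<Longrightarrow> p i \<ge> 0" "(\<Sum>i<m. p i) = 1"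
    and corr: "\<And>\<alpha>. \<forall>k<n. \<alpha> ! k < d k ^ 2
      \<Longrightarrow> Re (corr_trace n d L \<rho> \<alpha>) = (\<Sum>i<m. p i * (\<Prod>k<n. t i k (\<alpha> ! k)))"
    and bloch: "\<And>i k. i < m \<Longrightarrow> k < n \<Longrightarrow> (\<Sum>a\<in>{1..<d k ^ 2}. (t i k a)\<^sup>2) \<le> 2 * (1 - 1 / real (d k))"
  shows "(tensor_moment n d 1 (corr_tensor n d L \<rho>) 2)\<^sup>2
    \<le> tensor_moment n d 1 (corr_tensor n d L \<rho>) 3 * (\<Prod>k<n. sqrt ((real (d k) - 1) / (2 * real (d k))))"
proof (rule tensor_moment_inequality[OF n _ p, where f = "\<lambda>i k a. t i k a / 2"])
  fix \<gamma> :: "nat list" assume "\<forall>j<n. 1 \<le> \<gamma> ! j \<and> \<gamma> ! j < d j ^ 2"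
  then show "corr_tensor n d L \<rho> \<gamma> = (\<Sum>i<m. p i * (\<Prod>k<n. t i k (\<gamma> ! k) / 2))"
    unfolding corr_tensor_def using corr by (simp add: sum_divide_distrib prod_dividef)
qed (use d bloch bloch_vector_half_norm_le in \<open>auto simp: Suc_le_eq\<close>)

lemma can_corr_tensor_moment_bound:
  fixes m :: nat and p :: "nat \<Rightarrow> real" and t :: "nat \<Rightarrow> nat \<Rightarrow> nat \<Rightarrow> real"
  assumes n: "0 < n" and d: "\<forall>k<n. 0 < d k"
    and p: "\<And>i. i < m \<Longrightarrow> p i \<ge> 0" "(\<Sum>i<m. p i) = 1"
    and corr: "\<And>\<alpha>. \<forall>k<n. \<alpha> ! k < d k ^ 2
      \<Longrightarrow> Re (corr_trace n d L \<rho> \<alpha>) = (\<Sum>i<m. p i * (\<Prod>k<n. t i k (\<alpha> ! k)))"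
    and t0: "\<And>i k. i < m \<Longrightarrow> k < n \<Longrightarrow> t i k 0 = 1"
    and bloch: "\<And>i k. i < m \<Longrightarrow> k < n \<Longrightarrow> (\<Sum>a\<in>{1..<d k ^ 2}. (t i k a)\<^sup>2) \<le> 2 * (1 - 1 / real (d k))"
  shows "(tensor_moment n d 0 (can_corr_tensor n d L \<rho>) 2)\<^sup>2
    \<le> tensor_moment n d 0 (can_corr_tensor n d L \<rho>) 3
       * (\<Prod>k<n. sqrt ((real (d k)^2 - real (d k) + 2) / (2 * real (d k)^2)))"
proof -
  define g :: "nat \<Rightarrow> nat \<Rightarrow> real" where "g k a = (if a = 0 then 1 / real (d k) else 1 / 2)" for k a
  show ?thesis
  proof (rule tensor_moment_inequality[OF n _ p, where f = "\<lambda>i k a. g k a * t i k a"])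
    fix \<gamma> :: "nat list" assume "\<forall>j<n. 0 \<le> \<gamma> ! j \<and> \<gamma> ! j < d j ^ 2"
    then show "can_corr_tensor n d L \<rho> \<gamma> = (\<Sum>i<m. p i * (\<Prod>k<n. g k (\<gamma> ! k) * t i k (\<gamma> ! k)))"
      unfolding can_corr_tensor_eq_prod[OF d] g_def using corr
      by (simp add: sum_distrib_right prod.distrib ac_simps)
  next
    fix i k assume "i < m" "k < n"
    then show "(\<Sum>a\<in>{0..<d k ^ 2}. (g k a * t i k a)\<^sup>2)
        \<le> (sqrt ((real (d k)^2 - real (d k) + 2) / (2 * real (d k)^2)))\<^sup>2"
      unfolding g_def using d t0 bloch by (intro bloch_vector_weighted_norm_le) auto
  next
    fix k
    show "0 \<le> sqrt ((real (d k)^2 - real (d k) + 2) / (2 * real (d k)^2))"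
      by (rule real_sqrt_ge_zero[OF canonical_weight_nonneg])
  qed simp
qed

theorem theorem3:
  fixes n :: nat and d :: "nat \<Rightarrow> nat"
    and L :: "nat \<Rightarrow> nat \<Rightarrow> nat \<Rightarrow> nat \<Rightarrow> complex"
    and \<rho> :: "nat list \<Rightarrow> nat list \<Rightarrow> complex"
  assumes "n \<ge> 2"
    and "\<forall>k<n. d k \<ge> 2"
    and "\<forall>k<n. su_generators (d k) (L (d k))"
    and "fully_separable n d \<rho>"
  shows "(tensor_moment n d 1 (corr_tensor n d L \<rho>) 2)^2
           \<le> tensor_moment n d 1 (corr_tensor n d L \<rho>) 3
              * (\<Prod>k<n. sqrt ((real (d k) - 1) / (2 * real (d k))))
       \<and> (tensor_moment n d 0 (can_corr_tensor n d L \<rho>) 2)^2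
           \<le> tensor_moment n d 0 (can_corr_tensor n d L \<rho>) 3
              * (\<Prod>k<n. sqrt ((real (d k)^2 - real (d k) + 2) / (2 * real (d k)^2)))"
proof -
  have n: "0 < n" and d: "\<forall>k<n. 0 < d k"
    using assms(1,2) by auto
  obtain m :: nat and p :: "nat \<Rightarrow> real" and t :: "nat \<Rightarrow> nat \<Rightarrow> nat \<Rightarrow> real"
    where p: "\<And>i. i < m \<Longrightarrow> p i \<ge> 0" "(\<Sum>i<m. p i) = 1"
    and corr: "\<And>\<alpha>. \<forall>k<n. \<alpha> ! k < d k ^ 2
      \<Longrightarrow> Re (corr_trace n d L \<rho> \<alpha>) = (\<Sum>i<m. p i * (\<Prod>k<n. t i k (\<alpha> ! k)))"
    and t0: "\<And>i k. i < m \<Longrightarrow> k < n \<Longrightarrow> t i k 0 = 1"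
    and bloch: "\<And>i k. i < m \<Longrightarrow> k < n \<Longrightarrow> (\<Sum>a\<in>{1..<d k ^ 2}. (t i k a)\<^sup>2) \<le> 2 * (1 - 1 / real (d k))"
    by (rule separable_bloch_decomposition[OF d assms(3,4)]) (rule that)
  show ?thesis
    using corr_tensor_moment_bound[OF n d p corr bloch] can_corr_tensor_moment_bound[OF n d p corr t0 bloch]
    by blast
qed

end
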